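(* Let $\mathsf C$ be a triangulated category and let $A\to B\to C\to\Sigma A$ and $A'\to B'\to C'\to\Sigma A'$ be two homotopy equivalent exact triangles. Then $A\oplus B'\oplus C\cong A'\oplus B\oplus C'$.
   Context: An exact triangle $A\to B\to C\to\Sigma A$ induces a presentation of a functor $F\colon\mathsf C^{\mathrm{op}}\to\mathrm{Ab}$ if there is an exact sequence $\mathrm{Hom}(-,B)\to\mathrm{Hom}(-,C)\to F\to0$ in which the first map is induced by $B\to C$. Two exact triangles are homotopy equivalent if they induce presentations of the same functor. *)

theory Defs
  imports "HOL-Algebra.Group"
begin

text \<open>A category with hom-sets, carrying an additive structure on hom-sets,
  a shift functor and a class of distinguished (exact) triangles.
  cmp C g f denotes the composite g o f.\<close>

record ('o, 'm) tcat =
  Ob  :: "'o set"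
  Hom :: "'o \<Rightarrow> 'o \<Rightarrow> 'm set"
  cmp :: "'m \<Rightarrow> 'm \<Rightarrow> 'm"
  idm :: "'o \<Rightarrow> 'm"
  madd :: "'m \<Rightarrow> 'm \<Rightarrow> 'm"
  zer :: "'o \<Rightarrow> 'o \<Rightarrow> 'm"
  shO :: "'o \<Rightarrow> 'o"
  shM :: "'m \<Rightarrow> 'm"
  tri :: "('o \<times> 'o \<times> 'o \<times> 'm \<times> 'm \<times> 'm) set"

definition category :: "('o, 'm, 'e) tcat_scheme \<Rightarrow> bool" where
  "category C \<longleftrightarrow>
     (\<forall>X Y. Hom C X Y \<noteq> {} \<longrightarrow> X \<in> Ob C \<and> Y \<in> Ob C) \<and>
     (\<forall>X Y X' Y'. Hom C X Y \<inter> Hom C X' Y' \<noteq> {} \<longrightarrow> X = X' \<and> Y = Y') \<and>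
     (\<forall>X \<in> Ob C. idm C X \<in> Hom C X X) \<and>
     (\<forall>X Y Z f g. f \<in> Hom C X Y \<longrightarrow> g \<in> Hom C Y Z \<longrightarrow> cmp C g f \<in> Hom C X Z) \<and>
     (\<forall>X Y Z W f g h. f \<in> Hom C X Y \<longrightarrow> g \<in> Hom C Y Z \<longrightarrow> h \<in> Hom C Z W \<longrightarrow>
        cmp C h (cmp C g f) = cmp C (cmp C h g) f) \<and>
     (\<forall>X Y f. f \<in> Hom C X Y \<longrightarrow> cmp C f (idm C X) = f \<and> cmp C (idm C Y) f = f)"

definition homgrp :: "('o, 'm, 'e) tcat_scheme \<Rightarrow> 'o \<Rightarrow> 'o \<Rightarrow> 'm monoid" where
  "homgrp C X Y = \<lparr>carrier = Hom C X Y, mult = madd C, one = zer C X Y\<rparr>"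

definition preadditive :: "('o, 'm, 'e) tcat_scheme \<Rightarrow> bool" where
  "preadditive C \<longleftrightarrow> category C \<and>
     (\<forall>X \<in> Ob C. \<forall>Y \<in> Ob C. comm_group (homgrp C X Y)) \<and>
     (\<forall>X Y Z f f' g. f \<in> Hom C X Y \<longrightarrow> f' \<in> Hom C X Y \<longrightarrow> g \<in> Hom C Y Z \<longrightarrow>
        cmp C g (madd C f f') = madd C (cmp C g f) (cmp C g f')) \<and>
     (\<forall>X Y Z f g g'. f \<in> Hom C X Y \<longrightarrow> g \<in> Hom C Y Z \<longrightarrow> g' \<in> Hom C Y Z \<longrightarrow>
        cmp C (madd C g g') f = madd C (cmp C g f) (cmp C g' f))"

definition zero_object :: "('o, 'm, 'e) tcat_scheme \<Rightarrow> 'o \<Rightarrow> bool" where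
  "zero_object C Z \<longleftrightarrow> Z \<in> Ob C \<and>
     (\<forall>X \<in> Ob C. Hom C Z X = {zer C Z X} \<and> Hom C X Z = {zer C X Z})"

definition biproduct :: "('o, 'm, 'e) tcat_scheme \<Rightarrow> 'o \<Rightarrow> 'o \<Rightarrow> 'o \<Rightarrow> 'm \<Rightarrow> 'm \<Rightarrow> 'm \<Rightarrow> 'm \<Rightarrow> bool" where
  "biproduct C X Y P i1 i2 p1 p2 \<longleftrightarrow> P \<in> Ob C \<and>
     i1 \<in> Hom C X P \<and> i2 \<in> Hom C Y P \<and> p1 \<in> Hom C P X \<and> p2 \<in> Hom C P Y \<and>
     cmp C p1 i1 = idm C X \<and> cmp C p2 i2 = idm C Y \<and>
     cmp C p1 i2 = zer C Y X \<and> cmp C p2 i1 = zer C X Y \<and>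
     madd C (cmp C i1 p1) (cmp C i2 p2) = idm C P"

definition additive :: "('o, 'm, 'e) tcat_scheme \<Rightarrow> bool" where
  "additive C \<longleftrightarrow> preadditive C \<and> (\<exists>Z. zero_object C Z) \<and>
     (\<forall>X \<in> Ob C. \<forall>Y \<in> Ob C. \<exists>P i1 i2 p1 p2. biproduct C X Y P i1 i2 p1 p2)"

definition is_biproduct3 :: "('o, 'm, 'e) tcat_scheme \<Rightarrow> 'o \<Rightarrow> 'o \<Rightarrow> 'o \<Rightarrow> 'o \<Rightarrow> bool" where
  "is_biproduct3 C X1 X2 X3 D \<longleftrightarrow> D \<in> Ob C \<and>
     (\<exists>i1 i2 i3 p1 p2 p3.
        i1 \<in> Hom C X1 D \<and> i2 \<in> Hom C X2 D \<and> i3 \<in> Hom C X3 D \<and>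
        p1 \<in> Hom C D X1 \<and> p2 \<in> Hom C D X2 \<and> p3 \<in> Hom C D X3 \<and>
        cmp C p1 i1 = idm C X1 \<and> cmp C p2 i2 = idm C X2 \<and> cmp C p3 i3 = idm C X3 \<and>
        cmp C p1 i2 = zer C X2 X1 \<and> cmp C p1 i3 = zer C X3 X1 \<and>
        cmp C p2 i1 = zer C X1 X2 \<and> cmp C p2 i3 = zer C X3 X2 \<and>
        cmp C p3 i1 = zer C X1 X3 \<and> cmp C p3 i2 = zer C X2 X3 \<and>
        madd C (madd C (cmp C i1 p1) (cmp C i2 p2)) (cmp C i3 p3) = idm C D)"

definition iso_mor :: "('o, 'm, 'e) tcat_scheme \<Rightarrow> 'o \<Rightarrow> 'o \<Rightarrow> 'm \<Rightarrow> bool" where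
  "iso_mor C X Y f \<longleftrightarrow> f \<in> Hom C X Y \<and>
     (\<exists>g \<in> Hom C Y X. cmp C g f = idm C X \<and> cmp C f g = idm C Y)"

definition isomorphic :: "('o, 'm, 'e) tcat_scheme \<Rightarrow> 'o \<Rightarrow> 'o \<Rightarrow> bool" where
  "isomorphic C X Y \<longleftrightarrow> (\<exists>f. iso_mor C X Y f)"

definition additive_shift :: "('o, 'm, 'e) tcat_scheme \<Rightarrow> bool" where
  "additive_shift C \<longleftrightarrow>
     (\<forall>X \<in> Ob C. shO C X \<in> Ob C) \<and>
     (\<forall>X Y f. f \<in> Hom C X Y \<longrightarrow> shM C f \<in> Hom C (shO C X) (shO C Y)) \<and>
     (\<forall>X \<in> Ob C. shM C (idm C X) = idm C (shO C X)) \<and>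
     (\<forall>X Y Z f g. f \<in> Hom C X Y \<longrightarrow> g \<in> Hom C Y Z \<longrightarrow>
        shM C (cmp C g f) = cmp C (shM C g) (shM C f)) \<and>
     (\<forall>X Y f f'. f \<in> Hom C X Y \<longrightarrow> f' \<in> Hom C X Y \<longrightarrow>
        shM C (madd C f f') = madd C (shM C f) (shM C f')) \<and>
     (\<forall>X \<in> Ob C. \<forall>Y \<in> Ob C. bij_betw (shM C) (Hom C X Y) (Hom C (shO C X) (shO C Y))) \<and>
     (\<forall>Y \<in> Ob C. \<exists>X \<in> Ob C. isomorphic C Y (shO C X))"

definition is_triangle :: "('o, 'm, 'e) tcat_scheme \<Rightarrow> 'o \<times> 'o \<times> 'o \<times> 'm \<times> 'm \<times> 'm \<Rightarrow> bool" where
  "is_triangle C T = (case T of (A, B, D, u, v, w) \<Rightarrow>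
     A \<in> Ob C \<and> B \<in> Ob C \<and> D \<in> Ob C \<and>
     u \<in> Hom C A B \<and> v \<in> Hom C B D \<and> w \<in> Hom C D (shO C A))"

definition tri_morphism :: "('o, 'm, 'e) tcat_scheme \<Rightarrow> 'o \<times> 'o \<times> 'o \<times> 'm \<times> 'm \<times> 'm \<Rightarrow>
    'o \<times> 'o \<times> 'o \<times> 'm \<times> 'm \<times> 'm \<Rightarrow> 'm \<Rightarrow> 'm \<Rightarrow> 'm \<Rightarrow> bool" where
  "tri_morphism C T T' a b c = (case T of (A, B, D, u, v, w) \<Rightarrow> case T' of (A', B', D', u', v', w') \<Rightarrow>
     a \<in> Hom C A A' \<and> b \<in> Hom C B B' \<and> c \<in> Hom C D D' \<and>
     cmp C b u = cmp C u' a \<and> cmp C c v = cmp C v' b \<and> cmp C (shM C a) w = cmp C w' c)"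

definition rotate :: "('o, 'm, 'e) tcat_scheme \<Rightarrow> 'o \<times> 'o \<times> 'o \<times> 'm \<times> 'm \<times> 'm \<Rightarrow>
    'o \<times> 'o \<times> 'o \<times> 'm \<times> 'm \<times> 'm" where
  "rotate C T = (case T of (A, B, D, u, v, w) \<Rightarrow>
     (B, D, shO C A, v, w, inv\<^bsub>homgrp C (shO C A) (shO C B)\<^esub> (shM C u)))"

definition triangulated :: "('o, 'm, 'e) tcat_scheme \<Rightarrow> bool" where
  "triangulated C \<longleftrightarrow> additive C \<and> additive_shift C \<and>
     (\<forall>T \<in> tri C. is_triangle C T) \<and>
     \<comment> \<open>TR1: closure under isomorphism of triangles\<close>
     (\<forall>T T' a b c. T \<in> tri C \<longrightarrow> is_triangle C T' \<longrightarrow> tri_morphism C T T' a b c \<longrightarrow>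
        (case T of (A, B, D, _) \<Rightarrow> case T' of (A', B', D', _) \<Rightarrow>
           iso_mor C A A' a \<and> iso_mor C B B' b \<and> iso_mor C D D' c) \<longrightarrow> T' \<in> tri C) \<and>
     \<comment> \<open>TR1: X \<rightarrow> X \<rightarrow> 0 \<rightarrow> \<Sigma>X is exact\<close>
     (\<forall>X \<in> Ob C. \<forall>Z. zero_object C Z \<longrightarrow>
        (X, X, Z, idm C X, zer C X Z, zer C Z (shO C X)) \<in> tri C) \<and>
     \<comment> \<open>TR1: every morphism embeds in an exact triangle\<close>
     (\<forall>X Y f. f \<in> Hom C X Y \<longrightarrow> (\<exists>D v w. (X, Y, D, f, v, w) \<in> tri C)) \<and>
     \<comment> \<open>TR2: rotation\<close>
     (\<forall>T. is_triangle C T \<longrightarrow> (T \<in> tri C \<longleftrightarrow> rotate C T \<in> tri C)) \<and>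
     \<comment> \<open>TR3: completion of morphisms\<close>
     (\<forall>A B D u v w A' B' D' u' v' w' a b.
        (A, B, D, u, v, w) \<in> tri C \<longrightarrow> (A', B', D', u', v', w') \<in> tri C \<longrightarrow>
        a \<in> Hom C A A' \<longrightarrow> b \<in> Hom C B B' \<longrightarrow> cmp C b u = cmp C u' a \<longrightarrow>
        (\<exists>c. tri_morphism C (A, B, D, u, v, w) (A', B', D', u', v', w') a b c)) \<and>
     \<comment> \<open>TR4: octahedral axiom\<close>
     (\<forall>X Y Z f g Q1 p1 d1 Q2 p2 d2 Q3 p3 d3.
        f \<in> Hom C X Y \<longrightarrow> g \<in> Hom C Y Z \<longrightarrow>
        (X, Y, Q1, f, p1, d1) \<in> tri C \<longrightarrow>
        (X, Z, Q2, cmp C g f, p2, d2) \<in> tri C \<longrightarrow>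
        (Y, Z, Q3, g, p3, d3) \<in> tri C \<longrightarrow>
        (\<exists>a b. a \<in> Hom C Q1 Q2 \<and> b \<in> Hom C Q2 Q3 \<and>
           (Q1, Q2, Q3, a, b, cmp C (shM C p1) d3) \<in> tri C \<and>
           cmp C a p1 = cmp C p2 g \<and> cmp C d2 a = d1 \<and>
           cmp C b p2 = p3 \<and> cmp C (shM C f) d2 = cmp C d3 b))"

definition ab_functor :: "('o, 'm, 'e) tcat_scheme \<Rightarrow> ('o \<Rightarrow> 'x monoid) \<Rightarrow> ('m \<Rightarrow> 'x \<Rightarrow> 'x) \<Rightarrow> bool" where
  "ab_functor C FO FM \<longleftrightarrow>
     (\<forall>X \<in> Ob C. comm_group (FO X)) \<and>
     (\<forall>X Y f. f \<in> Hom C X Y \<longrightarrow> FM f \<in> hom (FO Y) (FO X)) \<and>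
     (\<forall>X \<in> Ob C. \<forall>x \<in> carrier (FO X). FM (idm C X) x = x) \<and>
     (\<forall>X Y Z f g. f \<in> Hom C X Y \<longrightarrow> g \<in> Hom C Y Z \<longrightarrow>
        (\<forall>x \<in> carrier (FO Z). FM (cmp C g f) x = FM f (FM g x)))"

text \<open>The triangle (A,B,C0,u,v,w) induces a presentation of F via \<pi>:
  Hom(-,B) \<rightarrow> Hom(-,C0) \<rightarrow> F \<rightarrow> 0 is exact, the first map being v \<circ> -,
  and \<pi> : Hom(-,C0) \<rightarrow> F a natural transformation.\<close>
definition presents :: "('o, 'm, 'e) tcat_scheme \<Rightarrow> 'o \<times> 'o \<times> 'o \<times> 'm \<times> 'm \<times> 'm \<Rightarrow>
    ('o \<Rightarrow> 'x monoid) \<Rightarrow> ('m \<Rightarrow> 'x \<Rightarrow> 'x) \<Rightarrow> ('o \<Rightarrow> 'm \<Rightarrow> 'x) \<Rightarrow> bool" where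
  "presents C T FO FM \<pi> \<longleftrightarrow> ab_functor C FO FM \<and>
     (case T of (A, B, D, u, v, w) \<Rightarrow>
       (\<forall>X \<in> Ob C.
          \<pi> X \<in> hom (homgrp C X D) (FO X) \<and>
          \<pi> X ` Hom C X D = carrier (FO X) \<and>
          {h \<in> Hom C X D. \<pi> X h = \<one>\<^bsub>FO X\<^esub>} = (\<lambda>k. cmp C v k) ` Hom C X B) \<and>
       (\<forall>X Y f h. f \<in> Hom C X Y \<longrightarrow> h \<in> Hom C Y D \<longrightarrow>
          \<pi> X (cmp C h f) = FM f (\<pi> Y h)))"

end

theory Submission
  imports Defs "HOL-Algebra.Ring"
begin

text \<open>Comparing the two presentations of F by the Yoneda lemma gives c : D \<rightarrow> D' and
  c' : D' \<rightarrow> D such that c' c and c c' differ from the identities by maps factoring through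
  v and v'; lifting and completing them with the triangle axioms yields b : B \<rightarrow> B' and
  a : A \<rightarrow> A'. The sequence 0 \<rightarrow> A \<rightarrow> B \<oplus> A' \<rightarrow> D \<oplus> B' \<rightarrow> D' \<rightarrow> 0 with differentials
  (u, a), [[v, 0], [b, -u']] and (c, -v') is then exact on every functor Hom(X, -).
  In the endomorphism ring of S = P \<oplus> Q its terms become idempotents and its differentials
  corner elements, so exactness produces a contracting homotopy. A split exact sequence
  identifies the sum of its even terms, A \<oplus> D \<oplus> B' \<cong> P, with the sum of its odd terms,
  B \<oplus> A' \<oplus> D' \<cong> Q.\<close>

section \<open>Split exact complexes in a ring\<close>

context ring
begin

definition corner :: "'a \<Rightarrow> 'a \<Rightarrow> 'a set" where
  "corner f e = {x \<in> carrier R. f \<otimes> x = x \<and> x \<otimes> e = x}"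

text \<open>An element y with e \<otimes> y = y stands for a generalised element of the summand e;
  exactness is tested on all of them at once. With f = d' = \<zero> it says that d is
  injective on such elements.\<close>

definition exact_at :: "'a \<Rightarrow> 'a \<Rightarrow> 'a \<Rightarrow> 'a \<Rightarrow> bool" where
  "exact_at f d' e d \<longleftrightarrow>
     (\<forall>y \<in> carrier R. e \<otimes> y = y \<longrightarrow> d \<otimes> y = \<zero> \<longrightarrow> (\<exists>x \<in> carrier R. f \<otimes> x = x \<and> d' \<otimes> x = y))"

lemma corner_closed: "x \<in> corner f e \<Longrightarrow> x \<in> carrier R"
  by (simp add: corner_def)

lemma corner_mult_zero:
  assumes "x \<in> corner a b" "y \<in> corner c e" "b \<in> carrier R" "c \<in> carrier R" "b \<otimes> c = \<zero>"
  shows "x \<otimes> y = \<zero>"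
proof -
  have x: "x \<in> carrier R" "x \<otimes> b = x" and y: "y \<in> carrier R" "c \<otimes> y = y"
    using assms(1,2) by (auto simp: corner_def)
  have "x \<otimes> y = (x \<otimes> b) \<otimes> (c \<otimes> y)" by (simp only: x(2) y(2))
  also have "\<dots> = x \<otimes> ((b \<otimes> c) \<otimes> y)" using x(1) y(1) assms(3,4) by (simp add: m_assoc)
  finally show ?thesis using x y assms by simp
qed

lemma zero_in_corner: "\<zero> \<in> corner f e" if "f \<in> carrier R" "e \<in> carrier R"
  using that by (simp add: corner_def)

lemma complement_idempotent:
  assumes e: "e \<in> carrier R" "e \<otimes> e = e"
    and d: "d \<in> corner g e" and H: "H \<in> corner e g"
    and dHd: "d \<otimes> (H \<otimes> d) = d" and HdH: "H \<otimes> (d \<otimes> H) = H"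
  defines "y \<equiv> e \<ominus> H \<otimes> d"
  shows "y \<in> carrier R" "e \<otimes> y = y" "y \<otimes> e = y" "y \<otimes> y = y"
    and "y \<otimes> H = \<zero>" "d \<otimes> y = \<zero>" "y \<oplus> H \<otimes> d = e"
proof -
  have [simp]: "d \<in> carrier R" "H \<in> carrier R" and de: "d \<otimes> e = d" and eH: "e \<otimes> H = H"
    using d H by (simp_all add: corner_def)
  have eHd: "e \<otimes> (H \<otimes> d) = H \<otimes> d" using eH e by (simp flip: m_assoc)
  have Hde: "H \<otimes> d \<otimes> e = H \<otimes> d" using de e by (simp add: m_assoc)
  show y: "y \<in> carrier R" unfolding y_def using e by simp
  show "e \<otimes> y = y" unfolding y_def using e eHd by (simp add: r_minus minus_eq r_distr)
  show ye: "y \<otimes> e = y" unfolding y_def using e Hde by (simp add: l_minus minus_eq l_distr)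
  show yH: "y \<otimes> H = \<zero>"
    unfolding y_def using e eH HdH by (simp add: l_minus minus_eq l_distr m_assoc r_neg)
  have "y \<otimes> y = y \<otimes> e \<ominus> y \<otimes> H \<otimes> d"
    using y e by (subst (2) y_def) (simp add: r_minus minus_eq r_distr m_assoc)
  then show "y \<otimes> y = y" using ye yH y by (simp add: minus_eq)
  show "d \<otimes> y = \<zero>" unfolding y_def using e de dHd by (simp add: r_minus minus_eq r_distr r_neg)
  show "y \<oplus> H \<otimes> d = e" unfolding y_def using e by (simp add: minus_eq a_assoc l_neg)
qed

text \<open>One step of a contracting homotopy, built from the right end of the complex.
  Multiplying the preimage of e \<ominus> H \<otimes> d by this idempotent makes the new homotopy
  satisfy H' d' H' = H' and H' H = \<zero>, which kills all cross terms in the theorem below.\<close>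

lemma homotopy_step:
  assumes exact: "exact_at f d' e d"
    and carr: "e \<in> carrier R" "f \<in> carrier R" and idem: "e \<otimes> e = e"
    and d': "d' \<in> corner e f" and d: "d \<in> corner g e" and H: "H \<in> corner e g"
    and dd': "d \<otimes> d' = \<zero>" and dHd: "d \<otimes> (H \<otimes> d) = d" and HdH: "H \<otimes> (d \<otimes> H) = H"
  obtains H' where "H' \<in> corner f e" "d' \<otimes> H' \<oplus> H \<otimes> d = e"
    "d' \<otimes> (H' \<otimes> d') = d'" "H' \<otimes> (d' \<otimes> H') = H'" "H' \<otimes> H = \<zero>"
proof -
  define y where "y = e \<ominus> H \<otimes> d"
  note y = complement_idempotent[OF carr(1) idem d H dHd HdH, folded y_def]
  have [simp]: "d' \<in> carrier R" "d \<in> carrier R" "H \<in> carrier R" and ed': "e \<otimes> d' = d'"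
    using d' d H by (simp_all add: corner_def)
  have yd': "y \<otimes> d' = d'"
    unfolding y_def using carr ed' dd' by (simp add: l_minus minus_eq l_distr m_assoc)
  obtain x where x: "x \<in> carrier R" "f \<otimes> x = x" "d' \<otimes> x = y"
    using exact y(1,2,6) unfolding exact_at_def by blast
  have d'xy: "d' \<otimes> (x \<otimes> y) = y" using x y(1,4) by (simp flip: m_assoc)
  have "f \<otimes> (x \<otimes> y) = x \<otimes> y" using x y(1) carr by (simp flip: m_assoc)
  moreover have "x \<otimes> y \<otimes> e = x \<otimes> y" using x y(1,3) carr by (simp add: m_assoc)
  ultimately have "x \<otimes> y \<in> corner f e" unfolding corner_def using x y(1) by simp
  moreover have "d' \<otimes> (x \<otimes> y) \<oplus> H \<otimes> d = e" using d'xy y(7) by simp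
  moreover have "d' \<otimes> (x \<otimes> y \<otimes> d') = d'"
  proof -
    have "x \<otimes> y \<otimes> d' = x \<otimes> d'" using x y(1) yd' by (simp add: m_assoc)
    then show ?thesis using x yd' by (simp add: x(3) flip: m_assoc)
  qed
  moreover have "x \<otimes> y \<otimes> (d' \<otimes> (x \<otimes> y)) = x \<otimes> y" using x y(1,4) d'xy by (simp add: m_assoc)
  moreover have "x \<otimes> y \<otimes> H = \<zero>" using x y(1,5) by (simp add: m_assoc)
  ultimately show ?thesis by (rule that)
qed

theorem exact_complex_splits:
  assumes carr: "e0 \<in> carrier R" "f1 \<in> carrier R" "e2 \<in> carrier R" "f3 \<in> carrier R"
    and idem: "e0 \<otimes> e0 = e0" "f1 \<otimes> f1 = f1" "e2 \<otimes> e2 = e2" "f3 \<otimes> f3 = f3"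
    and orth: "e0 \<otimes> e2 = \<zero>" "e2 \<otimes> e0 = \<zero>" "f1 \<otimes> f3 = \<zero>" "f3 \<otimes> f1 = \<zero>"
    and d: "d0 \<in> corner f1 e0" "d1 \<in> corner e2 f1" "d2 \<in> corner f3 e2"
    and complex: "d1 \<otimes> d0 = \<zero>" "d2 \<otimes> d1 = \<zero>"
    and exact: "exact_at \<zero> \<zero> e0 d0" "exact_at e0 d0 f1 d1" "exact_at f1 d1 e2 d2" "exact_at e2 d2 f3 \<zero>"
  obtains \<Phi> \<Psi> where "\<Phi> \<in> carrier R" "\<Psi> \<in> carrier R" "\<Psi> \<otimes> \<Phi> = e0 \<oplus> e2" "\<Phi> \<otimes> \<Psi> = f1 \<oplus> f3"
proof -
  have [simp]: "d0 \<in> carrier R" "d1 \<in> carrier R" "d2 \<in> carrier R"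
    using d by (simp_all add: corner_def)
  obtain H3 where H3: "H3 \<in> corner e2 f3" "d2 \<otimes> H3 \<oplus> \<zero> \<otimes> \<zero> = f3"
      "d2 \<otimes> (H3 \<otimes> d2) = d2" "H3 \<otimes> (d2 \<otimes> H3) = H3"
    using homotopy_step[OF exact(4) carr(4,3) idem(4) d(3), of \<zero> \<zero>] carr zero_in_corner by auto
  obtain H2 where H2: "H2 \<in> corner f1 e2" "d1 \<otimes> H2 \<oplus> H3 \<otimes> d2 = e2"
      "d1 \<otimes> (H2 \<otimes> d1) = d1" "H2 \<otimes> (d1 \<otimes> H2) = H2" "H2 \<otimes> H3 = \<zero>"
    using homotopy_step[OF exact(3) carr(3,2) idem(3) d(2) d(3) H3(1) complex(2) H3(3,4)] by blast
  obtain H1 where H1: "H1 \<in> corner e0 f1" "d0 \<otimes> H1 \<oplus> H2 \<otimes> d1 = f1"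
      "d0 \<otimes> (H1 \<otimes> d0) = d0" "H1 \<otimes> (d0 \<otimes> H1) = H1" "H1 \<otimes> H2 = \<zero>"
    using homotopy_step[OF exact(2) carr(2,1) idem(2) d(1) d(2) H2(1) complex(1) H2(3,4)] by blast
  obtain H0 where H0: "H0 \<in> corner \<zero> e0" "\<zero> \<otimes> H0 \<oplus> H1 \<otimes> d0 = e0"
    using homotopy_step[OF exact(1) carr(1) zero_closed idem(1) zero_in_corner[OF carr(1) zero_closed]
        d(1) H1(1) r_null[of d0] H1(3,4)]
    by auto
  have "H0 \<in> carrier R" using H0(1) by (rule corner_closed)
  hence H1d0: "H1 \<otimes> d0 = e0" using H0(2) H1(1) by (simp add: corner_def)
  have [simp]: "H1 \<in> carrier R" "H2 \<in> carrier R" "H3 \<in> carrier R"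
    using H1 H2 H3 by (simp_all add: corner_def)
  have zeros: "H1 \<otimes> d2 = \<zero>" "d1 \<otimes> d2 = \<zero>" "H3 \<otimes> d0 = \<zero>" "H3 \<otimes> H2 = \<zero>"
      "d0 \<otimes> d1 = \<zero>" "d0 \<otimes> H3 = \<zero>" "H2 \<otimes> H1 = \<zero>" "d2 \<otimes> H1 = \<zero>"
    using corner_mult_zero carr orth d H1(1) H2(1) H3(1) by blast+
  define \<Phi> where "\<Phi> = d0 \<oplus> H2 \<oplus> d2"
  define \<Psi> where "\<Psi> = H1 \<oplus> d1 \<oplus> H3"
  have "\<Psi> \<otimes> \<Phi> = H1 \<otimes> d0 \<oplus> (d1 \<otimes> H2 \<oplus> H3 \<otimes> d2)"
    unfolding \<Phi>_def \<Psi>_def using zeros complex H1(5) H2(5) by (simp add: l_distr r_distr a_ac)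
  moreover have "\<Phi> \<otimes> \<Psi> = (d0 \<otimes> H1 \<oplus> H2 \<otimes> d1) \<oplus> d2 \<otimes> H3"
    unfolding \<Phi>_def \<Psi>_def using zeros complex H1(5) H2(5) by (simp add: l_distr r_distr a_ac)
  ultimately show ?thesis
    using that[of \<Phi> \<Psi>] H1d0 H1(2) H2(2) H3(2) carr by (simp add: \<Phi>_def \<Psi>_def)
qed

end

section \<open>Preadditive categories\<close>

locale preadditive_category =
  fixes C :: "('o, 'm, 'e) tcat_scheme"
  assumes preadditive: "preadditive C"
begin

abbreviation comp :: "'m \<Rightarrow> 'm \<Rightarrow> 'm"  (infixr "\<circ>\<^sub>C" 70)
  where "g \<circ>\<^sub>C f \<equiv> cmp C g f"

abbreviation plus :: "'m \<Rightarrow> 'm \<Rightarrow> 'm"  (infixl "+\<^sub>C" 65)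
  where "f +\<^sub>C g \<equiv> madd C f g"

definition neg :: "'o \<Rightarrow> 'o \<Rightarrow> 'm \<Rightarrow> 'm" where
  "neg X Y f = inv\<^bsub>homgrp C X Y\<^esub> f"

lemma category: "category C"
  using preadditive by (simp add: preadditive_def)

lemma hom_dom: "f \<in> Hom C X Y \<Longrightarrow> X \<in> Ob C"
  and hom_cod: "f \<in> Hom C X Y \<Longrightarrow> Y \<in> Ob C"
  using category unfolding category_def by (metis empty_iff)+

lemma id_in_hom: "X \<in> Ob C \<Longrightarrow> idm C X \<in> Hom C X X"
  using category unfolding category_def by blast

lemma comp_in_hom: "f \<in> Hom C X Y \<Longrightarrow> g \<in> Hom C Y Z \<Longrightarrow> g \<circ>\<^sub>C f \<in> Hom C X Z"
  using category unfolding category_def by blast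

lemma comp_assoc:
  "f \<in> Hom C X Y \<Longrightarrow> g \<in> Hom C Y Z \<Longrightarrow> h \<in> Hom C Z W \<Longrightarrow> (h \<circ>\<^sub>C g) \<circ>\<^sub>C f = h \<circ>\<^sub>C g \<circ>\<^sub>C f"
  using category unfolding category_def by simp

lemma comp_id_right: "f \<in> Hom C X Y \<Longrightarrow> f \<circ>\<^sub>C idm C X = f"
  and comp_id_left: "f \<in> Hom C X Y \<Longrightarrow> idm C Y \<circ>\<^sub>C f = f"
  using category unfolding category_def by blast+

lemma comp_distrib_left:
  "f \<in> Hom C X Y \<Longrightarrow> f' \<in> Hom C X Y \<Longrightarrow> g \<in> Hom C Y Z \<Longrightarrow> g \<circ>\<^sub>C (f +\<^sub>C f') = g \<circ>\<^sub>C f +\<^sub>C g \<circ>\<^sub>C f'"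
  using preadditive unfolding preadditive_def by blast

lemma comp_distrib_right:
  "f \<in> Hom C X Y \<Longrightarrow> g \<in> Hom C Y Z \<Longrightarrow> g' \<in> Hom C Y Z \<Longrightarrow> (g +\<^sub>C g') \<circ>\<^sub>C f = g \<circ>\<^sub>C f +\<^sub>C g' \<circ>\<^sub>C f"
  using preadditive unfolding preadditive_def by blast

lemma hom_group_ob: "X \<in> Ob C \<Longrightarrow> Y \<in> Ob C \<Longrightarrow> comm_group (homgrp C X Y)"
  using preadditive unfolding preadditive_def by blast

lemma hom_group: "f \<in> Hom C X Y \<Longrightarrow> comm_group (homgrp C X Y)"
  using hom_group_ob hom_dom hom_cod by blast

lemma zero_in_hom: "X \<in> Ob C \<Longrightarrow> Y \<in> Ob C \<Longrightarrow> zer C X Y \<in> Hom C X Y"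
proof -
  assume "X \<in> Ob C" "Y \<in> Ob C"
  then interpret comm_group "homgrp C X Y" by (rule hom_group_ob)
  show ?thesis using one_closed by (simp add: homgrp_def)
qed

lemma add_in_hom: "f \<in> Hom C X Y \<Longrightarrow> g \<in> Hom C X Y \<Longrightarrow> f +\<^sub>C g \<in> Hom C X Y"
proof -
  assume fg: "f \<in> Hom C X Y" "g \<in> Hom C X Y"
  then interpret comm_group "homgrp C X Y" by (intro hom_group)
  show ?thesis using fg m_closed[of f g] by (simp add: homgrp_def)
qed

lemma neg_in_hom: "f \<in> Hom C X Y \<Longrightarrow> neg X Y f \<in> Hom C X Y"
proof -
  assume f: "f \<in> Hom C X Y"
  then interpret comm_group "homgrp C X Y" by (rule hom_group)
  show ?thesis using f inv_closed[of f] by (simp add: homgrp_def neg_def)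
qed

lemma add_assoc:
  "f \<in> Hom C X Y \<Longrightarrow> g \<in> Hom C X Y \<Longrightarrow> h \<in> Hom C X Y \<Longrightarrow> f +\<^sub>C g +\<^sub>C h = f +\<^sub>C (g +\<^sub>C h)"
proof -
  assume fgh: "f \<in> Hom C X Y" "g \<in> Hom C X Y" "h \<in> Hom C X Y"
  then interpret comm_group "homgrp C X Y" by (intro hom_group)
  show ?thesis using fgh m_assoc[of f g h] by (simp add: homgrp_def)
qed

lemma add_commute: "f \<in> Hom C X Y \<Longrightarrow> g \<in> Hom C X Y \<Longrightarrow> f +\<^sub>C g = g +\<^sub>C f"
proof -
  assume fg: "f \<in> Hom C X Y" "g \<in> Hom C X Y"
  then interpret comm_group "homgrp C X Y" by (intro hom_group)
  show ?thesis using fg m_comm[of f g] by (simp add: homgrp_def)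
qed

lemma zero_add: "f \<in> Hom C X Y \<Longrightarrow> zer C X Y +\<^sub>C f = f"
  and add_zero: "f \<in> Hom C X Y \<Longrightarrow> f +\<^sub>C zer C X Y = f"
  and add_neg: "f \<in> Hom C X Y \<Longrightarrow> f +\<^sub>C neg X Y f = zer C X Y"
  and neg_add: "f \<in> Hom C X Y \<Longrightarrow> neg X Y f +\<^sub>C f = zer C X Y"
proof -
  assume f: "f \<in> Hom C X Y"
  then interpret comm_group "homgrp C X Y" by (rule hom_group)
  show "zer C X Y +\<^sub>C f = f" "f +\<^sub>C zer C X Y = f"
    using f l_one[of f] r_one[of f] by (simp_all add: homgrp_def)
  show "f +\<^sub>C neg X Y f = zer C X Y" "neg X Y f +\<^sub>C f = zer C X Y"
    using f r_inv[of f] l_inv[of f] by (simp_all add: homgrp_def neg_def)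
qed

lemma add_left_cancel:
  "f \<in> Hom C X Y \<Longrightarrow> g \<in> Hom C X Y \<Longrightarrow> h \<in> Hom C X Y \<Longrightarrow> f +\<^sub>C g = f +\<^sub>C h \<Longrightarrow> g = h"
proof -
  assume fgh: "f \<in> Hom C X Y" "g \<in> Hom C X Y" "h \<in> Hom C X Y" "f +\<^sub>C g = f +\<^sub>C h"
  then interpret comm_group "homgrp C X Y" by (intro hom_group)
  show ?thesis using fgh Units_l_cancel[of f g h] Units_eq by (simp add: homgrp_def)
qed

lemma comp_zero_right: "g \<in> Hom C Y Z \<Longrightarrow> X \<in> Ob C \<Longrightarrow> g \<circ>\<^sub>C zer C X Y = zer C X Z"
proof -
  assume g: "g \<in> Hom C Y Z" and X: "X \<in> Ob C"
  have z: "zer C X Y \<in> Hom C X Y" using X g hom_dom zero_in_hom by blast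
  have gz: "g \<circ>\<^sub>C zer C X Y \<in> Hom C X Z" using z g comp_in_hom by blast
  have "g \<circ>\<^sub>C zer C X Y +\<^sub>C g \<circ>\<^sub>C zer C X Y = g \<circ>\<^sub>C zer C X Y +\<^sub>C zer C X Z"
    using comp_distrib_left[OF z z g] zero_add[OF z] add_zero[OF gz] by simp
  then show ?thesis using add_left_cancel gz zero_in_hom X g hom_cod by blast
qed

lemma comp_zero_left: "f \<in> Hom C X Y \<Longrightarrow> Z \<in> Ob C \<Longrightarrow> zer C Y Z \<circ>\<^sub>C f = zer C X Z"
proof -
  assume f: "f \<in> Hom C X Y" and Z: "Z \<in> Ob C"
  have z: "zer C Y Z \<in> Hom C Y Z" using Z f hom_cod zero_in_hom by blast
  have zf: "zer C Y Z \<circ>\<^sub>C f \<in> Hom C X Z" using z f comp_in_hom by blast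
  have "zer C Y Z \<circ>\<^sub>C f +\<^sub>C zer C Y Z \<circ>\<^sub>C f = zer C Y Z \<circ>\<^sub>C f +\<^sub>C zer C X Z"
    using comp_distrib_right[OF f z z] zero_add[OF z] add_zero[OF zf] by simp
  then show ?thesis using add_left_cancel zf zero_in_hom Z f hom_dom by blast
qed

lemma comp_neg_right: "f \<in> Hom C X Y \<Longrightarrow> g \<in> Hom C Y Z \<Longrightarrow> g \<circ>\<^sub>C neg X Y f = neg X Z (g \<circ>\<^sub>C f)"
proof -
  assume f: "f \<in> Hom C X Y" and g: "g \<in> Hom C Y Z"
  have gf: "g \<circ>\<^sub>C f \<in> Hom C X Z" using f g comp_in_hom by blast
  have "g \<circ>\<^sub>C f +\<^sub>C g \<circ>\<^sub>C neg X Y f = g \<circ>\<^sub>C f +\<^sub>C neg X Z (g \<circ>\<^sub>C f)"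
    using comp_distrib_left[OF f neg_in_hom[OF f] g] add_neg[OF f] add_neg[OF gf]
      comp_zero_right[OF g hom_dom[OF f]] by simp
  then show ?thesis using add_left_cancel gf comp_in_hom neg_in_hom f g by blast
qed

lemma comp_neg_left: "f \<in> Hom C X Y \<Longrightarrow> g \<in> Hom C Y Z \<Longrightarrow> neg Y Z g \<circ>\<^sub>C f = neg X Z (g \<circ>\<^sub>C f)"
proof -
  assume f: "f \<in> Hom C X Y" and g: "g \<in> Hom C Y Z"
  have gf: "g \<circ>\<^sub>C f \<in> Hom C X Z" using f g comp_in_hom by blast
  have "g \<circ>\<^sub>C f +\<^sub>C neg Y Z g \<circ>\<^sub>C f = g \<circ>\<^sub>C f +\<^sub>C neg X Z (g \<circ>\<^sub>C f)"
    using comp_distrib_right[OF f g neg_in_hom[OF g]] add_neg[OF g] add_neg[OF gf]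
      comp_zero_left[OF f hom_cod[OF g]] by simp
  then show ?thesis using add_left_cancel gf comp_in_hom neg_in_hom f g by blast
qed

lemma neg_zero: "X \<in> Ob C \<Longrightarrow> Y \<in> Ob C \<Longrightarrow> neg X Y (zer C X Y) = zer C X Y"
  using add_neg zero_add neg_in_hom zero_in_hom by metis

lemma add_neg_eq_iff:
  assumes "f \<in> Hom C X Y" "g \<in> Hom C X Y" "z \<in> Hom C X Y"
  shows "f +\<^sub>C neg X Y g = z \<longleftrightarrow> f = g +\<^sub>C z"
proof
  assume "f +\<^sub>C neg X Y g = z"
  then have "g +\<^sub>C z = (f +\<^sub>C neg X Y g) +\<^sub>C g" using assms add_commute add_in_hom neg_in_hom by metis
  also have "\<dots> = f" using assms add_assoc neg_add add_zero neg_in_hom by metis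
  finally show "f = g +\<^sub>C z" by simp
next
  assume "f = g +\<^sub>C z"
  then have "f +\<^sub>C neg X Y g = z +\<^sub>C g +\<^sub>C neg X Y g" using assms add_commute by metis
  also have "\<dots> = z" using assms add_assoc add_neg add_zero neg_in_hom by metis
  finally show "f +\<^sub>C neg X Y g = z" .
qed

lemma add_neg_cancel_right: "f \<in> Hom C X Y \<Longrightarrow> g \<in> Hom C X Y \<Longrightarrow> f +\<^sub>C g +\<^sub>C neg X Y g = f"
  using add_assoc add_neg add_zero neg_in_hom by metis

lemma add_neg_eq_zero_iff: "f \<in> Hom C X Y \<Longrightarrow> g \<in> Hom C X Y \<Longrightarrow> f +\<^sub>C neg X Y g = zer C X Y \<longleftrightarrow> f = g"
  using add_neg_eq_iff add_zero hom_dom hom_cod zero_in_hom by metis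

lemma neg_inject: "f \<in> Hom C X Y \<Longrightarrow> g \<in> Hom C X Y \<Longrightarrow> neg X Y f = neg X Y g \<longleftrightarrow> f = g"
  using add_neg add_neg_eq_zero_iff neg_in_hom by metis

definition endo_ring :: "'o \<Rightarrow> 'm ring" where
  "endo_ring S = \<lparr>carrier = Hom C S S, mult = cmp C, one = idm C S, zero = zer C S S, add = madd C\<rparr>"

lemma ring_endo_ring: assumes S: "S \<in> Ob C" shows "ring (endo_ring S)"
proof (rule ringI)
  show "abelian_group (endo_ring S)"
  proof (rule abelian_groupI; unfold endo_ring_def ring_record_simps)
    fix x y z assume x: "x \<in> Hom C S S" and y: "y \<in> Hom C S S" and z: "z \<in> Hom C S S"
    show "x +\<^sub>C y \<in> Hom C S S" by (rule add_in_hom[OF x y])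
    show "x +\<^sub>C y +\<^sub>C z = x +\<^sub>C (y +\<^sub>C z)" by (rule add_assoc[OF x y z])
    show "x +\<^sub>C y = y +\<^sub>C x" by (rule add_commute[OF x y])
    show "zer C S S +\<^sub>C x = x" by (rule zero_add[OF x])
    show "\<exists>y\<in>Hom C S S. y +\<^sub>C x = zer C S S" using neg_in_hom[OF x] neg_add[OF x] by blast
  next
    show "zer C S S \<in> Hom C S S" by (rule zero_in_hom[OF S S])
  qed
  show "monoid (endo_ring S)"
  proof (rule monoidI; unfold endo_ring_def ring_record_simps)
    fix x y z assume x: "x \<in> Hom C S S" and y: "y \<in> Hom C S S" and z: "z \<in> Hom C S S"
    show "x \<circ>\<^sub>C y \<in> Hom C S S" by (rule comp_in_hom[OF y x])
    show "(x \<circ>\<^sub>C y) \<circ>\<^sub>C z = x \<circ>\<^sub>C y \<circ>\<^sub>C z" by (rule comp_assoc[OF z y x])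
    show "idm C S \<circ>\<^sub>C x = x" by (rule comp_id_left[OF x])
    show "x \<circ>\<^sub>C idm C S = x" by (rule comp_id_right[OF x])
  next
    show "idm C S \<in> Hom C S S" by (rule id_in_hom[OF S])
  qed
next
  fix x y z assume "x \<in> carrier (endo_ring S)" "y \<in> carrier (endo_ring S)" "z \<in> carrier (endo_ring S)"
  then show "(x \<oplus>\<^bsub>endo_ring S\<^esub> y) \<otimes>\<^bsub>endo_ring S\<^esub> z =
      x \<otimes>\<^bsub>endo_ring S\<^esub> z \<oplus>\<^bsub>endo_ring S\<^esub> y \<otimes>\<^bsub>endo_ring S\<^esub> z"
    and "z \<otimes>\<^bsub>endo_ring S\<^esub> (x \<oplus>\<^bsub>endo_ring S\<^esub> y) =
      z \<otimes>\<^bsub>endo_ring S\<^esub> x \<oplus>\<^bsub>endo_ring S\<^esub> z \<otimes>\<^bsub>endo_ring S\<^esub> y"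
    by (simp_all add: endo_ring_def comp_distrib_left comp_distrib_right)
qed

lemma retract_comp_eq_id:
  assumes i: "i \<in> Hom C P S" and p: "p \<in> Hom C S P" and pi: "p \<circ>\<^sub>C i = idm C P"
    and j: "j \<in> Hom C Q S" and q: "q \<in> Hom C S Q"
    and \<Phi>: "\<Phi> \<in> Hom C S S" and \<Psi>: "\<Psi> \<in> Hom C S S"
    and \<Psi>\<Phi>: "\<Psi> \<circ>\<^sub>C \<Phi> = i \<circ>\<^sub>C p" and \<Phi>\<Psi>: "\<Phi> \<circ>\<^sub>C \<Psi> = j \<circ>\<^sub>C q"
  shows "(p \<circ>\<^sub>C \<Psi> \<circ>\<^sub>C j) \<circ>\<^sub>C (q \<circ>\<^sub>C \<Phi> \<circ>\<^sub>C i) = idm C P"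
proof -
  have \<Phi>i: "\<Phi> \<circ>\<^sub>C i \<in> Hom C P S" and \<Psi>\<Phi>i: "\<Psi> \<circ>\<^sub>C \<Phi> \<circ>\<^sub>C i \<in> Hom C P S"
    using comp_in_hom i \<Phi> \<Psi> by blast+
  have q\<Phi>i: "q \<circ>\<^sub>C \<Phi> \<circ>\<^sub>C i \<in> Hom C P Q" using comp_in_hom \<Phi>i q by blast
  have "(p \<circ>\<^sub>C \<Psi> \<circ>\<^sub>C j) \<circ>\<^sub>C (q \<circ>\<^sub>C \<Phi> \<circ>\<^sub>C i) = p \<circ>\<^sub>C \<Psi> \<circ>\<^sub>C (j \<circ>\<^sub>C q) \<circ>\<^sub>C \<Phi> \<circ>\<^sub>C i"
    using comp_assoc[OF q\<Phi>i comp_in_hom[OF j \<Psi>] p] comp_assoc[OF q\<Phi>i j \<Psi>]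
      comp_assoc[OF \<Phi>i q j] by simp
  also have "\<dots> = p \<circ>\<^sub>C (\<Psi> \<circ>\<^sub>C \<Phi>) \<circ>\<^sub>C (\<Psi> \<circ>\<^sub>C \<Phi>) \<circ>\<^sub>C i"
    using \<Phi>\<Psi>[symmetric] comp_assoc[OF \<Phi>i \<Psi> \<Phi>] comp_assoc[OF i \<Phi> \<Psi>]
      comp_assoc[OF \<Psi>\<Phi>i \<Phi> \<Psi>] by simp
  also have "\<dots> = p \<circ>\<^sub>C (i \<circ>\<^sub>C p) \<circ>\<^sub>C (i \<circ>\<^sub>C p) \<circ>\<^sub>C i"
    using \<Psi>\<Phi> by simp
  also have "\<dots> = idm C P"
    using pi comp_assoc[OF i p i] comp_id_right[OF i] by simp
  finally show ?thesis .
qed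

lemma isomorphic_if_retracts_equivalent:
  assumes i: "i \<in> Hom C P S" and p: "p \<in> Hom C S P" and pi: "p \<circ>\<^sub>C i = idm C P"
    and j: "j \<in> Hom C Q S" and q: "q \<in> Hom C S Q" and qj: "q \<circ>\<^sub>C j = idm C Q"
    and \<Phi>: "\<Phi> \<in> Hom C S S" and \<Psi>: "\<Psi> \<in> Hom C S S"
    and \<Psi>\<Phi>: "\<Psi> \<circ>\<^sub>C \<Phi> = i \<circ>\<^sub>C p" and \<Phi>\<Psi>: "\<Phi> \<circ>\<^sub>C \<Psi> = j \<circ>\<^sub>C q"
  shows "isomorphic C P Q"
proof -
  have "q \<circ>\<^sub>C \<Phi> \<circ>\<^sub>C i \<in> Hom C P Q" and "p \<circ>\<^sub>C \<Psi> \<circ>\<^sub>C j \<in> Hom C Q P"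
    using comp_in_hom assms by blast+
  moreover have "(p \<circ>\<^sub>C \<Psi> \<circ>\<^sub>C j) \<circ>\<^sub>C (q \<circ>\<^sub>C \<Phi> \<circ>\<^sub>C i) = idm C P"
    using retract_comp_eq_id[OF i p pi j q \<Phi> \<Psi> \<Psi>\<Phi> \<Phi>\<Psi>] .
  moreover have "(q \<circ>\<^sub>C \<Phi> \<circ>\<^sub>C i) \<circ>\<^sub>C (p \<circ>\<^sub>C \<Psi> \<circ>\<^sub>C j) = idm C Q"
    using retract_comp_eq_id[OF j q qj i p \<Psi> \<Phi> \<Phi>\<Psi> \<Psi>\<Phi>] .
  ultimately show ?thesis unfolding isomorphic_def iso_mor_def by blast
qed

end

section \<open>Decompositions into summands\<close>

datatype idx3 = I1 | I2 | I3

context preadditive_category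
begin

text \<open>Jointly monic projections replace the identity \<Sum> incl k \<circ> proj k = id, which would
  require sums over the index type.\<close>

definition decomposition :: "'o \<Rightarrow> ('k \<Rightarrow> 'o) \<Rightarrow> ('k \<Rightarrow> 'm) \<Rightarrow> ('k \<Rightarrow> 'm) \<Rightarrow> bool" where
  "decomposition S X incl proj \<longleftrightarrow> S \<in> Ob C \<and>
     (\<forall>k. incl k \<in> Hom C (X k) S \<and> proj k \<in> Hom C S (X k)) \<and>
     (\<forall>k l. proj k \<circ>\<^sub>C incl l = (if k = l then idm C (X k) else zer C (X l) (X k))) \<and>
     (\<forall>Y f g. f \<in> Hom C Y S \<longrightarrow> g \<in> Hom C Y S \<longrightarrow> (\<forall>k. proj k \<circ>\<^sub>C f = proj k \<circ>\<^sub>C g) \<longrightarrow> f = g)"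

lemma decompositionD:
  assumes "decomposition S X incl proj"
  shows "S \<in> Ob C" "incl k \<in> Hom C (X k) S" "proj k \<in> Hom C S (X k)"
    and "proj k \<circ>\<^sub>C incl l = (if k = l then idm C (X k) else zer C (X l) (X k))"
    and "f \<in> Hom C Y S \<Longrightarrow> g \<in> Hom C Y S \<Longrightarrow> (\<And>k. proj k \<circ>\<^sub>C f = proj k \<circ>\<^sub>C g) \<Longrightarrow> f = g"
  using assms unfolding decomposition_def by blast+

lemma decomposition_biproduct3:
  assumes "is_biproduct3 C X1 X2 X3 P"
  obtains incl proj where "decomposition P (case_idx3 X1 X2 X3) incl proj"
proof -
  obtain i1 i2 i3 p1 p2 p3 where i: "i1 \<in> Hom C X1 P" "i2 \<in> Hom C X2 P" "i3 \<in> Hom C X3 P"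
    and p: "p1 \<in> Hom C P X1" "p2 \<in> Hom C P X2" "p3 \<in> Hom C P X3"
    and pi: "p1 \<circ>\<^sub>C i1 = idm C X1" "p2 \<circ>\<^sub>C i2 = idm C X2" "p3 \<circ>\<^sub>C i3 = idm C X3"
      "p1 \<circ>\<^sub>C i2 = zer C X2 X1" "p1 \<circ>\<^sub>C i3 = zer C X3 X1" "p2 \<circ>\<^sub>C i1 = zer C X1 X2"
      "p2 \<circ>\<^sub>C i3 = zer C X3 X2" "p3 \<circ>\<^sub>C i1 = zer C X1 X3" "p3 \<circ>\<^sub>C i2 = zer C X2 X3"
    and sum: "i1 \<circ>\<^sub>C p1 +\<^sub>C i2 \<circ>\<^sub>C p2 +\<^sub>C i3 \<circ>\<^sub>C p3 = idm C P"
    and P: "P \<in> Ob C"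
    using assms unfolding is_biproduct3_def by blast
  have ip: "i1 \<circ>\<^sub>C p1 \<in> Hom C P P" "i2 \<circ>\<^sub>C p2 \<in> Hom C P P" "i3 \<circ>\<^sub>C p3 \<in> Hom C P P"
    using i p comp_in_hom by blast+
  have expand: "f = i1 \<circ>\<^sub>C p1 \<circ>\<^sub>C f +\<^sub>C i2 \<circ>\<^sub>C p2 \<circ>\<^sub>C f +\<^sub>C i3 \<circ>\<^sub>C p3 \<circ>\<^sub>C f" if f: "f \<in> Hom C Y P" for f Y
  proof -
    have "f = (i1 \<circ>\<^sub>C p1 +\<^sub>C i2 \<circ>\<^sub>C p2 +\<^sub>C i3 \<circ>\<^sub>C p3) \<circ>\<^sub>C f" using sum comp_id_left[OF f] by simp
    also have "\<dots> = i1 \<circ>\<^sub>C p1 \<circ>\<^sub>C f +\<^sub>C i2 \<circ>\<^sub>C p2 \<circ>\<^sub>C f +\<^sub>C i3 \<circ>\<^sub>C p3 \<circ>\<^sub>C f"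
      using comp_distrib_right[OF f add_in_hom[OF ip(1,2)] ip(3)] comp_distrib_right[OF f ip(1,2)]
        comp_assoc[OF f p(1) i(1)] comp_assoc[OF f p(2) i(2)] comp_assoc[OF f p(3) i(3)] by simp
    finally show ?thesis .
  qed
  show ?thesis
  proof (rule that[of "case_idx3 i1 i2 i3" "case_idx3 p1 p2 p3"], unfold decomposition_def, intro conjI allI impI)
    fix k l
    show "case_idx3 i1 i2 i3 k \<in> Hom C (case_idx3 X1 X2 X3 k) P"
      and "case_idx3 p1 p2 p3 k \<in> Hom C P (case_idx3 X1 X2 X3 k)"
      using i p by (cases k; simp)+
    show "case_idx3 p1 p2 p3 k \<circ>\<^sub>C case_idx3 i1 i2 i3 l =
        (if k = l then idm C (case_idx3 X1 X2 X3 k) else zer C (case_idx3 X1 X2 X3 l) (case_idx3 X1 X2 X3 k))"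
      using pi by (cases k; cases l; simp)
  next
    fix Y f g assume f: "f \<in> Hom C Y P" and g: "g \<in> Hom C Y P"
      and fg: "\<forall>k. case_idx3 p1 p2 p3 k \<circ>\<^sub>C f = case_idx3 p1 p2 p3 k \<circ>\<^sub>C g"
    then show "f = g" using expand[OF f] expand[OF g] fg[rule_format, of I1] fg[rule_format, of I2]
      fg[rule_format, of I3] by simp
  qed (rule P)
qed

definition sum_incl :: "'m \<Rightarrow> 'm \<Rightarrow> ('k \<Rightarrow> 'm) \<Rightarrow> ('l \<Rightarrow> 'm) \<Rightarrow> 'k + 'l \<Rightarrow> 'm" where
  "sum_incl iP iQ inclP inclQ = case_sum (\<lambda>k. iP \<circ>\<^sub>C inclP k) (\<lambda>l. iQ \<circ>\<^sub>C inclQ l)"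

definition sum_proj :: "'m \<Rightarrow> 'm \<Rightarrow> ('k \<Rightarrow> 'm) \<Rightarrow> ('l \<Rightarrow> 'm) \<Rightarrow> 'k + 'l \<Rightarrow> 'm" where
  "sum_proj pP pQ projP projQ = case_sum (\<lambda>k. projP k \<circ>\<^sub>C pP) (\<lambda>l. projQ l \<circ>\<^sub>C pQ)"

context
  fixes P Q S iP iQ pP pQ X Y inclP projP inclQ projQ
  assumes biproduct: "biproduct C P Q S iP iQ pP pQ"
    and dP: "decomposition P X inclP projP" and dQ: "decomposition Q Y inclQ projQ"
begin

private lemma bp: "S \<in> Ob C" "iP \<in> Hom C P S" "iQ \<in> Hom C Q S" "pP \<in> Hom C S P" "pQ \<in> Hom C S Q"
  "pP \<circ>\<^sub>C iP = idm C P" "pQ \<circ>\<^sub>C iQ = idm C Q" "pP \<circ>\<^sub>C iQ = zer C Q P" "pQ \<circ>\<^sub>C iP = zer C P Q"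
  "iP \<circ>\<^sub>C pP +\<^sub>C iQ \<circ>\<^sub>C pQ = idm C S"
  using biproduct unfolding biproduct_def by blast+

private lemma summands:
  "inclP k \<in> Hom C (X k) P" "projP k \<in> Hom C P (X k)" "inclQ l \<in> Hom C (Y l) Q" "projQ l \<in> Hom C Q (Y l)"
  using decompositionD(2,3)[OF dP] decompositionD(2,3)[OF dQ] by blast+

private lemma comp_assoc4:
  assumes "\<iota> \<in> Hom C X1 X2" "i \<in> Hom C X2 X3" "p \<in> Hom C X3 X4" "\<rho> \<in> Hom C X4 X5"
  shows "(\<rho> \<circ>\<^sub>C p) \<circ>\<^sub>C i \<circ>\<^sub>C \<iota> = \<rho> \<circ>\<^sub>C (p \<circ>\<^sub>C i) \<circ>\<^sub>C \<iota>"
  using comp_assoc[OF comp_in_hom[OF assms(1,2)] assms(3,4)] comp_assoc[OF assms(1-3)] by simp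

lemma sum_proj_sum_incl:
  "sum_proj pP pQ projP projQ k \<circ>\<^sub>C sum_incl iP iQ inclP inclQ l =
    (if k = l then idm C (case_sum X Y k) else zer C (case_sum X Y l) (case_sum X Y k))"
proof (cases k; cases l)
  fix k' l' assume "k = Inl k'" "l = Inl l'"
  then show ?thesis
    using comp_assoc4[OF summands(1) bp(2,4) summands(2)] decompositionD(4)[OF dP]
      comp_id_left[OF summands(1)] bp(6)
    by (simp add: sum_incl_def sum_proj_def)
next
  fix k' l' assume "k = Inr k'" "l = Inr l'"
  then show ?thesis
    using comp_assoc4[OF summands(3) bp(3,5) summands(4)] decompositionD(4)[OF dQ]
      comp_id_left[OF summands(3)] bp(7)
    by (simp add: sum_incl_def sum_proj_def)
next
  fix k' l' assume "k = Inl k'" "l = Inr l'"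
  then show ?thesis
    using comp_assoc4[OF summands(3) bp(3,4) summands(2)] bp(8) comp_zero_left[OF summands(3)]
      comp_zero_right[OF summands(2)] hom_dom[OF summands(3)] hom_cod[OF summands(1)]
    by (simp add: sum_incl_def sum_proj_def)
next
  fix k' l' assume "k = Inr k'" "l = Inl l'"
  then show ?thesis
    using comp_assoc4[OF summands(1) bp(2,5) summands(4)] bp(9) comp_zero_left[OF summands(1)]
      comp_zero_right[OF summands(4)] hom_dom[OF summands(1)] hom_cod[OF summands(3)]
    by (simp add: sum_incl_def sum_proj_def)
qed

lemma sum_proj_jointly_monic:
  assumes f: "f \<in> Hom C Z S" and g: "g \<in> Hom C Z S"
    and fg: "\<And>k. sum_proj pP pQ projP projQ k \<circ>\<^sub>C f = sum_proj pP pQ projP projQ k \<circ>\<^sub>C g"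
  shows "f = g"
proof -
  have "projP k \<circ>\<^sub>C pP \<circ>\<^sub>C f = projP k \<circ>\<^sub>C pP \<circ>\<^sub>C g" for k
    using fg[of "Inl k"] comp_assoc[OF f bp(4) summands(2)] comp_assoc[OF g bp(4) summands(2)]
    by (simp add: sum_proj_def)
  then have P: "pP \<circ>\<^sub>C f = pP \<circ>\<^sub>C g" using decompositionD(5)[OF dP] comp_in_hom f g bp(4) by blast
  have "projQ k \<circ>\<^sub>C pQ \<circ>\<^sub>C f = projQ k \<circ>\<^sub>C pQ \<circ>\<^sub>C g" for k
    using fg[of "Inr k"] comp_assoc[OF f bp(5) summands(4)] comp_assoc[OF g bp(5) summands(4)]
    by (simp add: sum_proj_def)
  then have Q: "pQ \<circ>\<^sub>C f = pQ \<circ>\<^sub>C g" using decompositionD(5)[OF dQ] comp_in_hom f g bp(5) by blast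
  have expand: "h = iP \<circ>\<^sub>C pP \<circ>\<^sub>C h +\<^sub>C iQ \<circ>\<^sub>C pQ \<circ>\<^sub>C h" if h: "h \<in> Hom C Z S" for h
    using bp(10) comp_id_left[OF h] comp_distrib_right[OF h comp_in_hom[OF bp(4,2)] comp_in_hom[OF bp(5,3)]]
      comp_assoc[OF h bp(4,2)] comp_assoc[OF h bp(5,3)] by simp
  show "f = g" using expand[OF f] expand[OF g] P Q by simp
qed

lemma decomposition_biproduct:
  "decomposition S (case_sum X Y) (sum_incl iP iQ inclP inclQ) (sum_proj pP pQ projP projQ)"
  unfolding decomposition_def
proof (intro conjI allI impI)
  fix k
  show "sum_incl iP iQ inclP inclQ k \<in> Hom C (case_sum X Y k) S"
    and "sum_proj pP pQ projP projQ k \<in> Hom C S (case_sum X Y k)"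
    using comp_in_hom[OF summands(1) bp(2)] comp_in_hom[OF summands(3) bp(3)]
      comp_in_hom[OF bp(4) summands(2)] comp_in_hom[OF bp(5) summands(4)]
    by (cases k; simp add: sum_incl_def sum_proj_def)+
qed (use bp(1) sum_proj_sum_incl sum_proj_jointly_monic in blast)+

lemma sum_proj_retract_P:
  "sum_proj pP pQ projP projQ (Inl k) \<circ>\<^sub>C iP \<circ>\<^sub>C pP = sum_proj pP pQ projP projQ (Inl k)"
  "sum_proj pP pQ projP projQ (Inr l) \<circ>\<^sub>C iP \<circ>\<^sub>C pP = zer C S (Y l)"
  using comp_assoc4[OF bp(4,2,4) summands(2)] comp_assoc4[OF bp(4,2,5) summands(4)] bp(6,9)
    comp_id_left[OF bp(4)] comp_zero_left[OF bp(4)] comp_zero_right[OF summands(4)] bp(1)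
    hom_cod[OF summands(3)]
  by (simp_all add: sum_proj_def)

lemma sum_proj_retract_Q:
  "sum_proj pP pQ projP projQ (Inl k) \<circ>\<^sub>C iQ \<circ>\<^sub>C pQ = zer C S (X k)"
  "sum_proj pP pQ projP projQ (Inr l) \<circ>\<^sub>C iQ \<circ>\<^sub>C pQ = sum_proj pP pQ projP projQ (Inr l)"
  using comp_assoc4[OF bp(5,3,4) summands(2)] comp_assoc4[OF bp(5,3,5) summands(4)] bp(7,8)
    comp_id_left[OF bp(5)] comp_zero_left[OF bp(5)] comp_zero_right[OF summands(2)] bp(1)
    hom_cod[OF summands(1)]
  by (simp_all add: sum_proj_def)

end

end

locale decomposed = preadditive_category C for C :: "('o, 'm, 'e) tcat_scheme" +
  fixes S :: 'o and X :: "'k \<Rightarrow> 'o" and incl proj :: "'k \<Rightarrow> 'm"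
  assumes decomposition: "decomposition S X incl proj"
begin

lemma S_ob: "S \<in> Ob C"
  and incl_hom: "incl k \<in> Hom C (X k) S"
  and proj_hom: "proj k \<in> Hom C S (X k)"
  and proj_incl: "proj k \<circ>\<^sub>C incl l = (if k = l then idm C (X k) else zer C (X l) (X k))"
  and eq_by_proj: "f \<in> Hom C Y S \<Longrightarrow> g \<in> Hom C Y S \<Longrightarrow> (\<And>k. proj k \<circ>\<^sub>C f = proj k \<circ>\<^sub>C g) \<Longrightarrow> f = g"
  using decompositionD[OF decomposition] by blast+

lemma summand_ob: "X k \<in> Ob C"
  using hom_dom[OF incl_hom] .

definition matrix_unit :: "'k \<Rightarrow> 'k \<Rightarrow> 'm \<Rightarrow> 'm" where
  "matrix_unit k l f = incl k \<circ>\<^sub>C f \<circ>\<^sub>C proj l"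

lemma matrix_unit_hom: "f \<in> Hom C (X l) (X k) \<Longrightarrow> matrix_unit k l f \<in> Hom C S S"
  unfolding matrix_unit_def using comp_in_hom incl_hom proj_hom by blast

lemma proj_incl_comp:
  assumes g: "g \<in> Hom C S (X l)"
  shows "proj k \<circ>\<^sub>C incl l \<circ>\<^sub>C g = (if k = l then g else zer C S (X k))"
proof -
  have "proj k \<circ>\<^sub>C incl l \<circ>\<^sub>C g = (proj k \<circ>\<^sub>C incl l) \<circ>\<^sub>C g"
    using comp_assoc[OF g incl_hom proj_hom] by simp
  then show ?thesis using proj_incl comp_id_left[OF g] comp_zero_left[OF g summand_ob] by simp
qed

lemma proj_matrix_unit:
  "f \<in> Hom C (X m) (X l) \<Longrightarrow> proj k \<circ>\<^sub>C matrix_unit l m f = (if k = l then f \<circ>\<^sub>C proj m else zer C S (X k))"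
  unfolding matrix_unit_def using proj_incl_comp comp_in_hom[OF proj_hom] by blast

lemma proj_matrix_unit_comp:
  assumes f: "f \<in> Hom C (X m) (X l)" and x: "x \<in> Hom C S S"
  shows "proj k \<circ>\<^sub>C matrix_unit l m f \<circ>\<^sub>C x = (if k = l then f \<circ>\<^sub>C proj m \<circ>\<^sub>C x else zer C S (X k))"
proof -
  have "matrix_unit l m f \<circ>\<^sub>C x = incl l \<circ>\<^sub>C f \<circ>\<^sub>C proj m \<circ>\<^sub>C x"
    unfolding matrix_unit_def using comp_assoc[OF x comp_in_hom[OF proj_hom f] incl_hom]
      comp_assoc[OF x proj_hom f] by simp
  then show ?thesis using proj_incl_comp comp_in_hom x proj_hom f by metis
qed

lemma incl_comp_hom: "g \<in> Hom C S (X k) \<Longrightarrow> incl k \<circ>\<^sub>C g \<in> Hom C S S"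
  using comp_in_hom incl_hom by blast

lemma proj_add: "x \<in> Hom C S S \<Longrightarrow> y \<in> Hom C S S \<Longrightarrow> proj k \<circ>\<^sub>C (x +\<^sub>C y) = proj k \<circ>\<^sub>C x +\<^sub>C proj k \<circ>\<^sub>C y"
  using comp_distrib_left proj_hom by blast

lemma endo_comp_hom: "x \<in> Hom C S S \<Longrightarrow> y \<in> Hom C S S \<Longrightarrow> x \<circ>\<^sub>C y \<in> Hom C S S"
  using comp_in_hom by blast

lemma endo_distrib_right:
  "x \<in> Hom C S S \<Longrightarrow> y \<in> Hom C S S \<Longrightarrow> z \<in> Hom C S S \<Longrightarrow> (x +\<^sub>C y) \<circ>\<^sub>C z = x \<circ>\<^sub>C z +\<^sub>C y \<circ>\<^sub>C z"
  using comp_distrib_right by blast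

lemma postcomp_rules:
  assumes g: "g \<in> Hom C Y Z"
  shows "x \<in> Hom C S Y \<Longrightarrow> g \<circ>\<^sub>C x \<in> Hom C S Z"
    and "x \<in> Hom C S Y \<Longrightarrow> neg Y Z g \<circ>\<^sub>C x \<in> Hom C S Z"
    and "x \<in> Hom C S Y \<Longrightarrow> x' \<in> Hom C S Y \<Longrightarrow> g \<circ>\<^sub>C (x +\<^sub>C x') = g \<circ>\<^sub>C x +\<^sub>C g \<circ>\<^sub>C x'"
    and "g \<circ>\<^sub>C zer C S Y = zer C S Z"
    and "x \<in> Hom C S Y \<Longrightarrow> g \<circ>\<^sub>C neg S Y x = neg S Z (g \<circ>\<^sub>C x)"
    and "x \<in> Hom C S Y \<Longrightarrow> neg Y Z g \<circ>\<^sub>C x = neg S Z (g \<circ>\<^sub>C x)"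
  using comp_in_hom[OF _ g] comp_in_hom[OF _ neg_in_hom[OF g]] comp_distrib_left[OF _ _ g]
    comp_zero_right[OF g S_ob] comp_neg_right[OF _ g] comp_neg_left[OF _ g] by blast+

end

section \<open>Triangulated categories\<close>

locale triangulated_category =
  fixes C :: "('o, 'm, 'e) tcat_scheme"
  assumes triangulated: "triangulated C"

sublocale triangulated_category \<subseteq> preadditive_category
proof
  show "preadditive C"
    using triangulated unfolding triangulated_def additive_def by (elim conjE)
qed

context triangulated_category
begin

lemma additive_shift: "additive_shift C"
  using triangulated unfolding triangulated_def by (elim conjE)

lemma shift_ob: "X \<in> Ob C \<Longrightarrow> shO C X \<in> Ob C"
  using additive_shift unfolding additive_shift_def by blast

lemma shift_hom: "f \<in> Hom C X Y \<Longrightarrow> shM C f \<in> Hom C (shO C X) (shO C Y)"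
  using additive_shift unfolding additive_shift_def by blast

lemma shift_id: "X \<in> Ob C \<Longrightarrow> shM C (idm C X) = idm C (shO C X)"
  using additive_shift unfolding additive_shift_def by blast

lemma shift_comp: "f \<in> Hom C X Y \<Longrightarrow> g \<in> Hom C Y Z \<Longrightarrow> shM C (g \<circ>\<^sub>C f) = shM C g \<circ>\<^sub>C shM C f"
  using additive_shift unfolding additive_shift_def by blast

lemma shift_add: "f \<in> Hom C X Y \<Longrightarrow> f' \<in> Hom C X Y \<Longrightarrow> shM C (f +\<^sub>C f') = shM C f +\<^sub>C shM C f'"
  using additive_shift unfolding additive_shift_def by blast

lemma shift_bij: "X \<in> Ob C \<Longrightarrow> Y \<in> Ob C \<Longrightarrow> bij_betw (shM C) (Hom C X Y) (Hom C (shO C X) (shO C Y))"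
  using additive_shift unfolding additive_shift_def by blast

lemma shift_inject: "f \<in> Hom C X Y \<Longrightarrow> g \<in> Hom C X Y \<Longrightarrow> shM C f = shM C g \<longleftrightarrow> f = g"
  using shift_bij hom_dom hom_cod unfolding bij_betw_def inj_on_def by blast

lemma shift_full:
  "X \<in> Ob C \<Longrightarrow> Y \<in> Ob C \<Longrightarrow> k \<in> Hom C (shO C X) (shO C Y) \<Longrightarrow> \<exists>f \<in> Hom C X Y. k = shM C f"
  using shift_bij unfolding bij_betw_def by blast

lemma shift_zero: "X \<in> Ob C \<Longrightarrow> Y \<in> Ob C \<Longrightarrow> shM C (zer C X Y) = zer C (shO C X) (shO C Y)"
proof -
  assume X: "X \<in> Ob C" and Y: "Y \<in> Ob C"
  have z: "zer C X Y \<in> Hom C X Y" using zero_in_hom X Y by blast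
  have sz: "shM C (zer C X Y) \<in> Hom C (shO C X) (shO C Y)" using shift_hom z by blast
  have "shM C (zer C X Y) +\<^sub>C shM C (zer C X Y) = shM C (zer C X Y) +\<^sub>C zer C (shO C X) (shO C Y)"
    using shift_add[OF z z] zero_add[OF z] add_zero[OF sz] by simp
  then show ?thesis using add_left_cancel sz zero_in_hom shift_ob X Y by blast
qed

lemma tri_components:
  "(A, B, D, u, v, w) \<in> tri C \<Longrightarrow> A \<in> Ob C \<and> B \<in> Ob C \<and> D \<in> Ob C \<and>
     u \<in> Hom C A B \<and> v \<in> Hom C B D \<and> w \<in> Hom C D (shO C A)"
proof -
  assume "(A, B, D, u, v, w) \<in> tri C"
  moreover have "\<forall>T \<in> tri C. is_triangle C T"
    using triangulated unfolding triangulated_def by (elim conjE)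
  ultimately show ?thesis unfolding is_triangle_def by fastforce
qed

lemma rotate_tri:
  assumes "(A, B, D, u, v, w) \<in> tri C"
  shows "(B, D, shO C A, v, w, neg (shO C A) (shO C B) (shM C u)) \<in> tri C"
proof -
  have "\<forall>T. is_triangle C T \<longrightarrow> (T \<in> tri C \<longleftrightarrow> rotate C T \<in> tri C)"
    using triangulated unfolding triangulated_def by (elim conjE)
  moreover have "is_triangle C (A, B, D, u, v, w)"
    using tri_components[OF assms] by (simp add: is_triangle_def)
  ultimately show ?thesis using assms by (simp add: rotate_def neg_def)
qed

lemma tri_complete:
  assumes "(A, B, D, u, v, w) \<in> tri C" "(A', B', D', u', v', w') \<in> tri C"
    and "a \<in> Hom C A A'" "b \<in> Hom C B B'" "b \<circ>\<^sub>C u = u' \<circ>\<^sub>C a"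
  obtains c where "c \<in> Hom C D D'" "c \<circ>\<^sub>C v = v' \<circ>\<^sub>C b" "shM C a \<circ>\<^sub>C w = w' \<circ>\<^sub>C c"
proof -
  have "\<forall>A B D u v w A' B' D' u' v' w' a b.
        (A, B, D, u, v, w) \<in> tri C \<longrightarrow> (A', B', D', u', v', w') \<in> tri C \<longrightarrow>
        a \<in> Hom C A A' \<longrightarrow> b \<in> Hom C B B' \<longrightarrow> cmp C b u = cmp C u' a \<longrightarrow>
        (\<exists>c. tri_morphism C (A, B, D, u, v, w) (A', B', D', u', v', w') a b c)"
    using triangulated unfolding triangulated_def by (elim conjE)
  then show ?thesis using assms that unfolding tri_morphism_def by fastforce
qed

lemma tri_zero_object:
  obtains Z where "Z \<in> Ob C" "\<And>X. X \<in> Ob C \<Longrightarrow> (X, X, Z, idm C X, zer C X Z, zer C Z (shO C X)) \<in> tri C"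
proof -
  have "additive C"
    using triangulated unfolding triangulated_def by (elim conjE)
  then obtain Z where Z: "zero_object C Z"
    unfolding additive_def by blast
  moreover have "\<forall>X \<in> Ob C. \<forall>Z. zero_object C Z \<longrightarrow>
      (X, X, Z, idm C X, zer C X Z, zer C Z (shO C X)) \<in> tri C"
    using triangulated unfolding triangulated_def by (elim conjE)
  ultimately show ?thesis using that unfolding zero_object_def by blast
qed

lemma tri_comp_zero:
  assumes T: "(A, B, D, u, v, w) \<in> tri C"
  shows "v \<circ>\<^sub>C u = zer C A D"
proof -
  obtain Z where Z: "Z \<in> Ob C" and T0: "(A, A, Z, idm C A, zer C A Z, zer C Z (shO C A)) \<in> tri C"
    using tri_zero_object tri_components[OF T] by metis
  have A: "A \<in> Ob C" and u: "u \<in> Hom C A B" using tri_components[OF T] by blast+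
  obtain c where "c \<in> Hom C Z D" "c \<circ>\<^sub>C zer C A Z = v \<circ>\<^sub>C u"
    using tri_complete[OF T0 T id_in_hom[OF A] u] by blast
  then show ?thesis using comp_zero_right A by metis
qed

lemma tri_weak_kernel:
  assumes T: "(A, B, D, u, v, w) \<in> tri C" and k: "k \<in> Hom C X B" and vk: "v \<circ>\<^sub>C k = zer C X D"
  obtains m where "m \<in> Hom C X A" "k = u \<circ>\<^sub>C m"
proof -
  have A: "A \<in> Ob C" and B: "B \<in> Ob C" and D: "D \<in> Ob C" and u: "u \<in> Hom C A B"
    using tri_components[OF T] by blast+
  have X: "X \<in> Ob C" using k hom_dom by blast
  obtain Z where Z: "Z \<in> Ob C" and T0: "(X, X, Z, idm C X, zer C X Z, zer C Z (shO C X)) \<in> tri C"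
    using tri_zero_object X by metis
  have "zer C Z D \<circ>\<^sub>C zer C X Z = v \<circ>\<^sub>C k"
    using vk comp_zero_left[OF zero_in_hom[OF X Z] D] by simp
  then obtain c where c: "c \<in> Hom C (shO C X) (shO C A)"
      "shM C k \<circ>\<^sub>C neg (shO C X) (shO C X) (shM C (idm C X)) = neg (shO C A) (shO C B) (shM C u) \<circ>\<^sub>C c"
    using tri_complete[OF rotate_tri[OF T0] rotate_tri[OF T] k zero_in_hom[OF Z D]] by blast
  have sk: "shM C k \<in> Hom C (shO C X) (shO C B)" and su: "shM C u \<in> Hom C (shO C A) (shO C B)"
    using k u shift_hom by blast+
  have "neg (shO C X) (shO C B) (shM C k) = neg (shO C X) (shO C B) (shM C u \<circ>\<^sub>C c)"
    using c(2) comp_neg_right[OF id_in_hom[OF shift_ob[OF X]] sk] comp_id_right[OF sk] shift_id[OF X]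
      comp_neg_left[OF c(1) su] by simp
  then have "shM C k = shM C u \<circ>\<^sub>C c" using neg_inject sk comp_in_hom[OF c(1) su] by blast
  moreover obtain m where m: "m \<in> Hom C X A" "c = shM C m" using shift_full[OF X A c(1)] by blast
  ultimately have "shM C k = shM C (u \<circ>\<^sub>C m)" using shift_comp[OF m(1) u] by simp
  then show ?thesis using that m(1) shift_inject k comp_in_hom[OF m(1) u] by blast
qed

lemma tri_complete_left:
  assumes T: "(A, B, D, u, v, w) \<in> tri C" and T': "(A', B', D', u', v', w') \<in> tri C"
    and b: "b \<in> Hom C B B'" and c: "c \<in> Hom C D D'" and cv: "c \<circ>\<^sub>C v = v' \<circ>\<^sub>C b"
  obtains a where "a \<in> Hom C A A'" "b \<circ>\<^sub>C u = u' \<circ>\<^sub>C a" "shM C a \<circ>\<^sub>C w = w' \<circ>\<^sub>C c"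
proof -
  have A: "A \<in> Ob C" and u: "u \<in> Hom C A B" and A': "A' \<in> Ob C" and u': "u' \<in> Hom C A' B'"
    using tri_components[OF T] tri_components[OF T'] by blast+
  obtain x where x: "x \<in> Hom C (shO C A) (shO C A')" "x \<circ>\<^sub>C w = w' \<circ>\<^sub>C c"
      "shM C b \<circ>\<^sub>C neg (shO C A) (shO C B) (shM C u) = neg (shO C A') (shO C B') (shM C u') \<circ>\<^sub>C x"
    using tri_complete[OF rotate_tri[OF T] rotate_tri[OF T'] b c cv] by blast
  obtain a where a: "a \<in> Hom C A A'" "x = shM C a" using shift_full[OF A A' x(1)] by blast
  have su: "shM C u \<in> Hom C (shO C A) (shO C B)" and su': "shM C u' \<in> Hom C (shO C A') (shO C B')"
    and sb: "shM C b \<in> Hom C (shO C B) (shO C B')"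
    using shift_hom u u' b by blast+
  have "neg (shO C A) (shO C B') (shM C b \<circ>\<^sub>C shM C u) = neg (shO C A) (shO C B') (shM C u' \<circ>\<^sub>C x)"
    using x(3) comp_neg_right[OF su sb] comp_neg_left[OF x(1) su'] by simp
  then have "shM C b \<circ>\<^sub>C shM C u = shM C u' \<circ>\<^sub>C x"
    using neg_inject comp_in_hom[OF su sb] comp_in_hom[OF x(1) su'] by blast
  then have "shM C (b \<circ>\<^sub>C u) = shM C (u' \<circ>\<^sub>C a)" using shift_comp u b a u' by simp
  then have "b \<circ>\<^sub>C u = u' \<circ>\<^sub>C a" using shift_inject comp_in_hom u b a(1) u' by blast
  then show ?thesis using that a x(2) by blast
qed

lemma tri_shift_comp_zero:
  assumes T: "(A, B, D, u, v, w) \<in> tri C"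
  shows "shM C u \<circ>\<^sub>C w = zer C D (shO C B)"
proof -
  have u: "shM C u \<in> Hom C (shO C A) (shO C B)" and w: "w \<in> Hom C D (shO C A)"
    using tri_components[OF T] shift_hom by blast+
  have "neg D (shO C B) (shM C u \<circ>\<^sub>C w) = zer C D (shO C B)"
    using tri_comp_zero[OF rotate_tri[OF rotate_tri[OF T]]] comp_neg_left[OF w u] by simp
  then show ?thesis
    using neg_inject[OF comp_in_hom[OF w u] zero_in_hom] neg_zero hom_dom hom_cod w u by metis
qed

lemma tri_weak_kernel_shift:
  assumes T: "(A, B, D, u, v, w) \<in> tri C" and m: "m \<in> Hom C X A" and um: "u \<circ>\<^sub>C m = zer C X B"
  obtains n where "n \<in> Hom C (shO C X) D" "shM C m = w \<circ>\<^sub>C n"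
proof -
  have X: "X \<in> Ob C" and B: "B \<in> Ob C" and u: "u \<in> Hom C A B" using m hom_dom tri_components[OF T] by blast+
  have sm: "shM C m \<in> Hom C (shO C X) (shO C A)" and su: "shM C u \<in> Hom C (shO C A) (shO C B)"
    using shift_hom m u by blast+
  have "neg (shO C A) (shO C B) (shM C u) \<circ>\<^sub>C shM C m = zer C (shO C X) (shO C B)"
    using comp_neg_left[OF sm su] shift_comp[OF m u] um shift_zero[OF X B]
      neg_zero[OF shift_ob[OF X] shift_ob[OF B]] by simp
  then show ?thesis using that tri_weak_kernel[OF rotate_tri[OF rotate_tri[OF T]] sm] by blast
qed

lemma biproduct_exists:
  assumes "X \<in> Ob C" "Y \<in> Ob C"
  obtains S i1 i2 p1 p2 where "biproduct C X Y S i1 i2 p1 p2"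
proof -
  have "additive C" using triangulated unfolding triangulated_def by (elim conjE)
  then show ?thesis using assms that unfolding additive_def by blast
qed

end

section \<open>Presentations of a functor by exact triangles\<close>

locale presentation = triangulated_category C for C :: "('o, 'm, 'e) tcat_scheme" +
  fixes A B D u v w and FO :: "'o \<Rightarrow> 'x monoid" and FM :: "'m \<Rightarrow> 'x \<Rightarrow> 'x" and \<pi> :: "'o \<Rightarrow> 'm \<Rightarrow> 'x"
  assumes tri: "(A, B, D, u, v, w) \<in> tri C"
    and presents: "presents C (A, B, D, u, v, w) FO FM \<pi>"
begin

lemma obs: "A \<in> Ob C" "B \<in> Ob C" "D \<in> Ob C"
  and homs: "u \<in> Hom C A B" "v \<in> Hom C B D" "w \<in> Hom C D (shO C A)"
  using tri_components[OF tri] by blast+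

lemma ab_functor: "ab_functor C FO FM"
  using presents by (simp add: presents_def)

lemma functor_group: "X \<in> Ob C \<Longrightarrow> comm_group (FO X)"
  using ab_functor by (simp add: ab_functor_def)

lemma presents_hom: "X \<in> Ob C \<Longrightarrow> \<pi> X \<in> hom (homgrp C X D) (FO X)"
  and presents_surj: "X \<in> Ob C \<Longrightarrow> \<pi> X ` Hom C X D = carrier (FO X)"
  and presents_kernel: "X \<in> Ob C \<Longrightarrow> {h \<in> Hom C X D. \<pi> X h = \<one>\<^bsub>FO X\<^esub>} = (\<lambda>k. v \<circ>\<^sub>C k) ` Hom C X B"
  and presents_natural: "f \<in> Hom C X Y \<Longrightarrow> h \<in> Hom C Y D \<Longrightarrow> \<pi> X (h \<circ>\<^sub>C f) = FM f (\<pi> Y h)"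
  using presents unfolding presents_def by auto

lemma presents_eq_one_iff: "h \<in> Hom C X D \<Longrightarrow> \<pi> X h = \<one>\<^bsub>FO X\<^esub> \<longleftrightarrow> (\<exists>k \<in> Hom C X B. h = v \<circ>\<^sub>C k)"
  using presents_kernel[OF hom_dom] by blast

lemma presents_in_carrier: "h \<in> Hom C X D \<Longrightarrow> \<pi> X h \<in> carrier (FO X)"
  using presents_surj[OF hom_dom] by blast

lemma presents_add: "h \<in> Hom C X D \<Longrightarrow> h' \<in> Hom C X D \<Longrightarrow> \<pi> X (h +\<^sub>C h') = \<pi> X h \<otimes>\<^bsub>FO X\<^esub> \<pi> X h'"
  using presents_hom[OF hom_dom] unfolding hom_def homgrp_def by simp

lemma presents_eq_iff:
  assumes h: "h \<in> Hom C X D" and h': "h' \<in> Hom C X D"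
  shows "\<pi> X h = \<pi> X h' \<longleftrightarrow> \<pi> X (h +\<^sub>C neg X D h') = \<one>\<^bsub>FO X\<^esub>"
proof -
  have X: "X \<in> Ob C" using h hom_dom by blast
  interpret F: comm_group "FO X" using functor_group[OF X] .
  have "\<pi> X (h +\<^sub>C neg X D h') \<otimes>\<^bsub>FO X\<^esub> \<pi> X h' = \<pi> X h"
    using presents_add[OF add_in_hom[OF h neg_in_hom[OF h']] h'] add_assoc[OF h neg_in_hom[OF h'] h']
      neg_add[OF h'] add_zero[OF h] by simp
  then show ?thesis
    using presents_in_carrier h h' add_in_hom neg_in_hom by (metis F.l_one F.r_cancel_one)
qed

end

locale two_presentations = triangulated_category C +
  T: presentation C A B D u v w FO FM \<pi> + T': presentation C A' B' D' u' v' w' FO FM \<pi>'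
  for C :: "('o, 'm, 'e) tcat_scheme" and A B D u v w A' B' D' u' v' w'
    and FO :: "'o \<Rightarrow> 'x monoid" and FM \<pi> \<pi>'
begin

text \<open>Yoneda: c is any preimage under \<pi>' of the element \<pi>(id) of F(D).\<close>
lemma comparison_exists:
  obtains c where "c \<in> Hom C D D'" "\<And>X \<gamma>. \<gamma> \<in> Hom C X D \<Longrightarrow> \<pi>' X (c \<circ>\<^sub>C \<gamma>) = \<pi> X \<gamma>"
proof -
  have "\<pi> D (idm C D) \<in> carrier (FO D)" using T.presents_in_carrier id_in_hom T.obs by blast
  then obtain c where c: "c \<in> Hom C D D'" "\<pi>' D c = \<pi> D (idm C D)"
    using T'.presents_surj[OF T.obs(3)] by (metis imageE)
  have "\<pi>' X (c \<circ>\<^sub>C \<gamma>) = \<pi> X \<gamma>" if \<gamma>: "\<gamma> \<in> Hom C X D" for X \<gamma>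
    using T'.presents_natural[OF \<gamma> c(1)] T.presents_natural[OF \<gamma> id_in_hom[OF T.obs(3)]]
      comp_id_left[OF \<gamma>] c(2) by simp
  then show ?thesis using that c(1) by blast
qed

lemma comparison_lift:
  assumes c: "c \<in> Hom C D D'" and c\<pi>: "\<And>X \<gamma>. \<gamma> \<in> Hom C X D \<Longrightarrow> \<pi>' X (c \<circ>\<^sub>C \<gamma>) = \<pi> X \<gamma>"
  obtains b where "b \<in> Hom C B B'" "c \<circ>\<^sub>C v = v' \<circ>\<^sub>C b"
proof -
  have "\<pi>' B (c \<circ>\<^sub>C v) = \<pi> B (v \<circ>\<^sub>C idm C B)" using c\<pi>[OF T.homs(2)] comp_id_right[OF T.homs(2)] by simp
  also have "\<dots> = \<one>\<^bsub>FO B\<^esub>"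
    using T.presents_eq_one_iff comp_in_hom id_in_hom T.obs T.homs by blast
  finally show ?thesis using that T'.presents_eq_one_iff comp_in_hom[OF T.homs(2) c] by blast
qed

lemma comparison_homotopy:
  assumes c: "c \<in> Hom C D D'" and c\<pi>: "\<And>X \<gamma>. \<gamma> \<in> Hom C X D \<Longrightarrow> \<pi>' X (c \<circ>\<^sub>C \<gamma>) = \<pi> X \<gamma>"
    and c': "c' \<in> Hom C D' D" and c'\<pi>: "\<And>X \<gamma>. \<gamma> \<in> Hom C X D' \<Longrightarrow> \<pi> X (c' \<circ>\<^sub>C \<gamma>) = \<pi>' X \<gamma>"
  obtains h where "h \<in> Hom C D B" "idm C D = c' \<circ>\<^sub>C c +\<^sub>C v \<circ>\<^sub>C h"
proof -
  have i: "idm C D \<in> Hom C D D" and c'c: "c' \<circ>\<^sub>C c \<in> Hom C D D"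
    using id_in_hom T.obs comp_in_hom c c' by blast+
  have "\<pi> D (idm C D) = \<pi> D (c' \<circ>\<^sub>C c)"
    using c\<pi>[OF i] c'\<pi>[OF c] comp_id_right[OF c] by simp
  then obtain h where h: "h \<in> Hom C D B" "idm C D +\<^sub>C neg D D (c' \<circ>\<^sub>C c) = v \<circ>\<^sub>C h"
    using T.presents_eq_iff[OF i c'c] T.presents_eq_one_iff add_in_hom[OF i neg_in_hom[OF c'c]] by blast
  then show ?thesis using that add_neg_eq_iff[OF i c'c comp_in_hom[OF h(1) T.homs(2)]] by blast
qed

end

text \<open>The lemmas named complex_exact_at state exactness on Hom(X, -) of the sequence
  0 \<rightarrow> A \<rightarrow> B \<oplus> A' \<rightarrow> D \<oplus> B' \<rightarrow> D' \<rightarrow> 0 with differentials (u, a), [[v, 0], [b, -u']] and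
  (c, -v'), at the indicated term.\<close>

locale triangle_comparison = two_presentations +
  fixes a b c b' c' h h'
  assumes a: "a \<in> Hom C A A'" and b: "b \<in> Hom C B B'" and c: "c \<in> Hom C D D'"
    and b': "b' \<in> Hom C B' B" and c': "c' \<in> Hom C D' D"
    and h: "h \<in> Hom C D B" and h': "h' \<in> Hom C D' B'"
    and bu: "b \<circ>\<^sub>C u = u' \<circ>\<^sub>C a" and cv: "c \<circ>\<^sub>C v = v' \<circ>\<^sub>C b" and aw: "shM C a \<circ>\<^sub>C w = w' \<circ>\<^sub>C c"
    and c'v': "c' \<circ>\<^sub>C v' = v \<circ>\<^sub>C b'"
    and homotopy: "idm C D = c' \<circ>\<^sub>C c +\<^sub>C v \<circ>\<^sub>C h"
    and homotopy': "idm C D' = c \<circ>\<^sub>C c' +\<^sub>C v' \<circ>\<^sub>C h'"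
    and c_presents: "\<And>X \<gamma>. \<gamma> \<in> Hom C X D \<Longrightarrow> \<pi>' X (c \<circ>\<^sub>C \<gamma>) = \<pi> X \<gamma>"
begin

text \<open>\<Sigma>m factors through w and then c n through v'; as c' c \<equiv> 1 modulo v, n factors
  through v, hence \<Sigma>m through w \<circ> v = 0.\<close>

lemma complex_exact_at_A:
  assumes m: "m \<in> Hom C X A" and um: "u \<circ>\<^sub>C m = zer C X B" and am: "a \<circ>\<^sub>C m = zer C X A'"
  shows "m = zer C X A"
proof -
  have X: "X \<in> Ob C" using m hom_dom by blast
  obtain n where n: "n \<in> Hom C (shO C X) D" "shM C m = w \<circ>\<^sub>C n"
    using tri_weak_kernel_shift[OF T.tri m um] by blast
  have cn: "c \<circ>\<^sub>C n \<in> Hom C (shO C X) D'" using comp_in_hom[OF n(1) c] .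
  have "w' \<circ>\<^sub>C c \<circ>\<^sub>C n = shM C a \<circ>\<^sub>C w \<circ>\<^sub>C n"
    using aw comp_assoc[OF n(1) c T'.homs(3)] comp_assoc[OF n(1) T.homs(3) shift_hom[OF a]] by simp
  also have "\<dots> = zer C (shO C X) (shO C A')"
    using n(2) shift_comp[OF m a] am shift_zero[OF X T'.obs(1)] by simp
  finally obtain p where p: "p \<in> Hom C (shO C X) B'" "c \<circ>\<^sub>C n = v' \<circ>\<^sub>C p"
    using tri_weak_kernel[OF rotate_tri[OF T'.tri] cn] by blast
  have q: "b' \<circ>\<^sub>C p +\<^sub>C h \<circ>\<^sub>C n \<in> Hom C (shO C X) B"
    using add_in_hom comp_in_hom p(1) b' n(1) h by blast
  have "n = (c' \<circ>\<^sub>C c +\<^sub>C v \<circ>\<^sub>C h) \<circ>\<^sub>C n" using homotopy comp_id_left[OF n(1)] by simp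
  also have "\<dots> = c' \<circ>\<^sub>C v' \<circ>\<^sub>C p +\<^sub>C v \<circ>\<^sub>C h \<circ>\<^sub>C n"
    using comp_distrib_right[OF n(1) comp_in_hom[OF c c'] comp_in_hom[OF h T.homs(2)]]
      comp_assoc[OF n(1) c c'] comp_assoc[OF n(1) h T.homs(2)] p(2) by simp
  also have "\<dots> = v \<circ>\<^sub>C (b' \<circ>\<^sub>C p +\<^sub>C h \<circ>\<^sub>C n)"
    using c'v' comp_assoc[OF p(1) T'.homs(2) c'] comp_assoc[OF p(1) b' T.homs(2)]
      comp_distrib_left[OF comp_in_hom[OF p(1) b'] comp_in_hom[OF n(1) h] T.homs(2)] by simp
  finally have "shM C m = (w \<circ>\<^sub>C v) \<circ>\<^sub>C (b' \<circ>\<^sub>C p +\<^sub>C h \<circ>\<^sub>C n)"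
    using n(2) comp_assoc[OF q T.homs(2,3)] by simp
  also have "\<dots> = shM C (zer C X A)"
    using tri_comp_zero[OF rotate_tri[OF T.tri]] comp_zero_left[OF q shift_ob[OF T.obs(1)]]
      shift_zero[OF X T.obs(1)] by simp
  finally show ?thesis using shift_inject m zero_in_hom[OF X T.obs(1)] by blast
qed

text \<open>\<Sigma>\<delta>' factors through w'; transporting the factorisation along c' and using
  c c' \<equiv> 1 modulo v' gives \<delta>.\<close>

lemma lift_kernel_of_u':
  assumes \<delta>': "\<delta>' \<in> Hom C X A'" and u'\<delta>': "u' \<circ>\<^sub>C \<delta>' = zer C X B'"
  obtains \<delta> where "\<delta> \<in> Hom C X A" "u \<circ>\<^sub>C \<delta> = zer C X B" "a \<circ>\<^sub>C \<delta> = \<delta>'"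
proof -
  have X: "X \<in> Ob C" using \<delta>' hom_dom by blast
  obtain n' where n': "n' \<in> Hom C (shO C X) D'" "shM C \<delta>' = w' \<circ>\<^sub>C n'"
    using tri_weak_kernel_shift[OF T'.tri \<delta>' u'\<delta>'] by blast
  have c'n': "c' \<circ>\<^sub>C n' \<in> Hom C (shO C X) D" using comp_in_hom[OF n'(1) c'] .
  obtain \<delta> where \<delta>: "\<delta> \<in> Hom C X A" "shM C \<delta> = w \<circ>\<^sub>C c' \<circ>\<^sub>C n'"
    using shift_full[OF X T.obs(1) comp_in_hom[OF c'n' T.homs(3)]] by metis
  have "shM C (u \<circ>\<^sub>C \<delta>) = (shM C u \<circ>\<^sub>C w) \<circ>\<^sub>C c' \<circ>\<^sub>C n'"
    using shift_comp[OF \<delta>(1) T.homs(1)] \<delta>(2) comp_assoc[OF c'n' T.homs(3) shift_hom[OF T.homs(1)]] by simp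
  also have "\<dots> = shM C (zer C X B)"
    using tri_shift_comp_zero[OF T.tri] comp_zero_left[OF c'n' shift_ob[OF T.obs(2)]]
      shift_zero[OF X T.obs(2)] by simp
  finally have u\<delta>: "u \<circ>\<^sub>C \<delta> = zer C X B"
    using shift_inject comp_in_hom[OF \<delta>(1) T.homs(1)] zero_in_hom[OF X T.obs(2)] by blast
  have h'n': "h' \<circ>\<^sub>C n' \<in> Hom C (shO C X) B'" using comp_in_hom[OF n'(1) h'] .
  have "w' \<circ>\<^sub>C n' = w' \<circ>\<^sub>C (c \<circ>\<^sub>C c' +\<^sub>C v' \<circ>\<^sub>C h') \<circ>\<^sub>C n'" using homotopy' comp_id_left[OF n'(1)] by simp
  also have "\<dots> = w' \<circ>\<^sub>C c \<circ>\<^sub>C c' \<circ>\<^sub>C n' +\<^sub>C (w' \<circ>\<^sub>C v') \<circ>\<^sub>C h' \<circ>\<^sub>C n'"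
    using comp_distrib_right[OF n'(1) comp_in_hom[OF c' c] comp_in_hom[OF h' T'.homs(2)]]
      comp_distrib_left[OF comp_in_hom[OF c'n' c] comp_in_hom[OF h'n' T'.homs(2)] T'.homs(3)]
      comp_assoc[OF n'(1) c' c] comp_assoc[OF n'(1) h' T'.homs(2)] comp_assoc[OF h'n' T'.homs(2,3)] by simp
  also have "\<dots> = w' \<circ>\<^sub>C c \<circ>\<^sub>C c' \<circ>\<^sub>C n'"
    using tri_comp_zero[OF rotate_tri[OF T'.tri]] comp_zero_left[OF h'n' shift_ob[OF T'.obs(1)]]
      add_zero comp_in_hom c'n' c T'.homs(3) by metis
  finally have "shM C (a \<circ>\<^sub>C \<delta>) = shM C \<delta>'"
    using shift_comp[OF \<delta>(1) a] \<delta>(2) n'(2) aw comp_assoc[OF c'n' T.homs(3) shift_hom[OF a]]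
      comp_assoc[OF c'n' c T'.homs(3)] by simp
  then have "a \<circ>\<^sub>C \<delta> = \<delta>'" using shift_inject comp_in_hom[OF \<delta>(1) a] \<delta>' by blast
  then show ?thesis using that \<delta>(1) u\<delta> by blast
qed

lemma complex_exact_at_BA':
  assumes \<beta>: "\<beta> \<in> Hom C X B" and \<alpha>: "\<alpha> \<in> Hom C X A'"
    and v\<beta>: "v \<circ>\<^sub>C \<beta> = zer C X D" and b\<beta>: "b \<circ>\<^sub>C \<beta> = u' \<circ>\<^sub>C \<alpha>"
  obtains m where "m \<in> Hom C X A" "u \<circ>\<^sub>C m = \<beta>" "a \<circ>\<^sub>C m = \<alpha>"
proof -
  obtain m0 where m0: "m0 \<in> Hom C X A" "\<beta> = u \<circ>\<^sub>C m0" using tri_weak_kernel[OF T.tri \<beta> v\<beta>] by blast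
  have am0: "a \<circ>\<^sub>C m0 \<in> Hom C X A'" using comp_in_hom[OF m0(1) a] .
  define \<delta>' where "\<delta>' = \<alpha> +\<^sub>C neg X A' (a \<circ>\<^sub>C m0)"
  have \<delta>': "\<delta>' \<in> Hom C X A'" unfolding \<delta>'_def using add_in_hom[OF \<alpha> neg_in_hom[OF am0]] .
  have "u' \<circ>\<^sub>C a \<circ>\<^sub>C m0 = u' \<circ>\<^sub>C \<alpha>"
    using m0(2) b\<beta> bu comp_assoc[OF m0(1) a T'.homs(1)] comp_assoc[OF m0(1) T.homs(1) b] by simp
  then have "u' \<circ>\<^sub>C \<delta>' = zer C X B'" unfolding \<delta>'_def
    using comp_distrib_left[OF \<alpha> neg_in_hom[OF am0] T'.homs(1)] comp_neg_right[OF am0 T'.homs(1)]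
      add_neg comp_in_hom[OF \<alpha> T'.homs(1)] by simp
  then obtain \<delta> where \<delta>: "\<delta> \<in> Hom C X A" "u \<circ>\<^sub>C \<delta> = zer C X B" "a \<circ>\<^sub>C \<delta> = \<delta>'"
    using lift_kernel_of_u'[OF \<delta>'] by blast
  have "u \<circ>\<^sub>C (m0 +\<^sub>C \<delta>) = \<beta>"
    using comp_distrib_left[OF m0(1) \<delta>(1) T.homs(1)] \<delta>(2) m0(2) add_zero \<beta> by simp
  moreover have "a \<circ>\<^sub>C (m0 +\<^sub>C \<delta>) = \<alpha>"
    using comp_distrib_left[OF m0(1) \<delta>(1) a] \<delta>(3) add_neg_eq_iff[OF \<alpha> am0 \<delta>'] add_commute[OF am0 \<delta>']
    unfolding \<delta>'_def by metis
  ultimately show ?thesis using that add_in_hom[OF m0(1) \<delta>(1)] by blast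
qed

lemma complex_exact_at_DB':
  assumes \<gamma>: "\<gamma> \<in> Hom C X D" and \<beta>': "\<beta>' \<in> Hom C X B'" and c\<gamma>: "c \<circ>\<^sub>C \<gamma> = v' \<circ>\<^sub>C \<beta>'"
  obtains \<beta> \<alpha> where "\<beta> \<in> Hom C X B" "\<alpha> \<in> Hom C X A'" "v \<circ>\<^sub>C \<beta> = \<gamma>" "b \<circ>\<^sub>C \<beta> = \<beta>' +\<^sub>C u' \<circ>\<^sub>C \<alpha>"
proof -
  have "\<pi> X \<gamma> = \<pi>' X (v' \<circ>\<^sub>C \<beta>')" using c_presents[OF \<gamma>] c\<gamma> by simp
  also have "\<dots> = \<one>\<^bsub>FO X\<^esub>" using T'.presents_eq_one_iff \<beta>' comp_in_hom T'.homs(2) by blast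
  finally obtain \<beta> where \<beta>: "\<beta> \<in> Hom C X B" "\<gamma> = v \<circ>\<^sub>C \<beta>"
    using T.presents_eq_one_iff[OF \<gamma>] by blast
  have b\<beta>: "b \<circ>\<^sub>C \<beta> \<in> Hom C X B'" using comp_in_hom[OF \<beta>(1) b] .
  have "v' \<circ>\<^sub>C b \<circ>\<^sub>C \<beta> = v' \<circ>\<^sub>C \<beta>'"
    using c\<gamma> \<beta>(2) cv comp_assoc[OF \<beta>(1) b T'.homs(2)] comp_assoc[OF \<beta>(1) T.homs(2) c] by simp
  then have "v' \<circ>\<^sub>C (b \<circ>\<^sub>C \<beta> +\<^sub>C neg X B' \<beta>') = zer C X D'"
    using comp_distrib_left[OF b\<beta> neg_in_hom[OF \<beta>'] T'.homs(2)] comp_neg_right[OF \<beta>' T'.homs(2)]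
      add_neg comp_in_hom[OF \<beta>' T'.homs(2)] by simp
  then obtain \<alpha> where \<alpha>: "\<alpha> \<in> Hom C X A'" "b \<circ>\<^sub>C \<beta> +\<^sub>C neg X B' \<beta>' = u' \<circ>\<^sub>C \<alpha>"
    using tri_weak_kernel[OF T'.tri add_in_hom[OF b\<beta> neg_in_hom[OF \<beta>']]] by blast
  then show ?thesis
    using that \<beta> add_neg_eq_iff[OF b\<beta> \<beta>' comp_in_hom[OF \<alpha>(1) T'.homs(1)]] by metis
qed

lemma complex_exact_at_D':
  assumes \<gamma>': "\<gamma>' \<in> Hom C X D'"
  obtains \<gamma> \<beta>' where "\<gamma> \<in> Hom C X D" "\<beta>' \<in> Hom C X B'" "\<gamma>' = c \<circ>\<^sub>C \<gamma> +\<^sub>C neg X D' (v' \<circ>\<^sub>C \<beta>')"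
proof -
  have X: "X \<in> Ob C" using \<gamma>' hom_dom by blast
  have "\<pi>' X \<gamma>' \<in> \<pi> X ` Hom C X D" using T'.presents_in_carrier[OF \<gamma>'] T.presents_surj[OF X] by simp
  then obtain \<gamma> where \<gamma>: "\<gamma> \<in> Hom C X D" "\<pi>' X \<gamma>' = \<pi>' X (c \<circ>\<^sub>C \<gamma>)" using c_presents by auto
  have c\<gamma>: "c \<circ>\<^sub>C \<gamma> \<in> Hom C X D'" using comp_in_hom[OF \<gamma>(1) c] .
  obtain \<beta>' where \<beta>': "\<beta>' \<in> Hom C X B'" "c \<circ>\<^sub>C \<gamma> +\<^sub>C neg X D' \<gamma>' = v' \<circ>\<^sub>C \<beta>'"
    using \<gamma>(2) T'.presents_eq_iff[OF c\<gamma> \<gamma>'] T'.presents_eq_one_iff add_in_hom[OF c\<gamma> neg_in_hom[OF \<gamma>']]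
    by metis
  then have "c \<circ>\<^sub>C \<gamma> = \<gamma>' +\<^sub>C v' \<circ>\<^sub>C \<beta>'"
    using add_neg_eq_iff[OF c\<gamma> \<gamma>' comp_in_hom[OF \<beta>'(1) T'.homs(2)]] by blast
  then show ?thesis
    using that \<gamma>(1) \<beta>'(1) add_neg_cancel_right[OF \<gamma>' comp_in_hom[OF \<beta>'(1) T'.homs(2)]] by metis
qed

end

section \<open>The comparison complex in the endomorphism ring of P \<oplus> Q\<close>

locale comparison_complex = triangle_comparison +
  fixes P Q S iP iQ pP pQ inclP projP inclQ projQ
  assumes biproduct: "biproduct C P Q S iP iQ pP pQ"
    and decomposition_P: "decomposition P (case_idx3 A B' D) inclP projP"
    and decomposition_Q: "decomposition Q (case_idx3 A' B D') inclQ projQ"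

sublocale comparison_complex \<subseteq> decomposed C S "case_sum (case_idx3 A B' D) (case_idx3 A' B D')"
    "sum_incl iP iQ inclP inclQ" "sum_proj pP pQ projP projQ"
  by unfold_locales (rule decomposition_biproduct[OF biproduct decomposition_P decomposition_Q])

context comparison_complex
begin

abbreviation "incl \<equiv> sum_incl iP iQ inclP inclQ"
abbreviation "proj \<equiv> sum_proj pP pQ projP projQ"
abbreviation "kA \<equiv> Inl I1"
abbreviation "kB' \<equiv> Inl I2"
abbreviation "kD \<equiv> Inl I3"
abbreviation "kA' \<equiv> Inr I1"
abbreviation "kB \<equiv> Inr I2"
abbreviation "kD' \<equiv> Inr I3"

text \<open>The terms A, B \<oplus> A', D \<oplus> B', D' of the complex become the idempotents e0, f1, e2, f3
  of End(S), and its differentials the matrices d0, d1, d2; P and Q correspond to e0 + e2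
  and f1 + f3.\<close>

definition "e0 = matrix_unit kA kA (idm C A)"
definition "f1 = matrix_unit kB kB (idm C B) +\<^sub>C matrix_unit kA' kA' (idm C A')"
definition "e2 = matrix_unit kD kD (idm C D) +\<^sub>C matrix_unit kB' kB' (idm C B')"
definition "f3 = matrix_unit kD' kD' (idm C D')"
definition "d0 = matrix_unit kB kA u +\<^sub>C matrix_unit kA' kA a"
definition "d1 = matrix_unit kD kB v +\<^sub>C matrix_unit kB' kB b +\<^sub>C matrix_unit kB' kA' (neg A' B' u')"
definition "d2 = matrix_unit kD' kD c +\<^sub>C matrix_unit kD' kB' (neg B' D' v')"

lemmas complex_defs = e0_def f1_def e2_def f3_def d0_def d1_def d2_def

lemma eq_by_components:
  assumes "x \<in> Hom C S S" "y \<in> Hom C S S"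
    and "proj kA \<circ>\<^sub>C x = proj kA \<circ>\<^sub>C y" "proj kB' \<circ>\<^sub>C x = proj kB' \<circ>\<^sub>C y" "proj kD \<circ>\<^sub>C x = proj kD \<circ>\<^sub>C y"
    and "proj kA' \<circ>\<^sub>C x = proj kA' \<circ>\<^sub>C y" "proj kB \<circ>\<^sub>C x = proj kB \<circ>\<^sub>C y" "proj kD' \<circ>\<^sub>C x = proj kD' \<circ>\<^sub>C y"
  shows "x = y"
proof (rule eq_by_proj[OF assms(1,2)])
  fix k show "proj k \<circ>\<^sub>C x = proj k \<circ>\<^sub>C y"
    using assms(3-8) by (cases k rule: sum.exhaust; rename_tac i; case_tac i; simp)
qed

lemma basic_homs:
  "u \<in> Hom C A B" "v \<in> Hom C B D" "u' \<in> Hom C A' B'" "v' \<in> Hom C B' D'"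
  "a \<in> Hom C A A'" "b \<in> Hom C B B'" "c \<in> Hom C D D'"
  "idm C A \<in> Hom C A A" "idm C B \<in> Hom C B B" "idm C D \<in> Hom C D D"
  "idm C A' \<in> Hom C A' A'" "idm C B' \<in> Hom C B' B'" "idm C D' \<in> Hom C D' D'"
  using T.homs T'.homs a b c id_in_hom T.obs T'.obs by blast+

lemma proj_homs: "proj kA \<in> Hom C S A" "proj kB' \<in> Hom C S B'" "proj kD \<in> Hom C S D"
  "proj kA' \<in> Hom C S A'" "proj kB \<in> Hom C S B" "proj kD' \<in> Hom C S D'"
  using proj_hom by (metis idx3.case sum.case)+

lemma proj_comp_homs: "x \<in> Hom C S S \<Longrightarrow> proj kA \<circ>\<^sub>C x \<in> Hom C S A"
  "x \<in> Hom C S S \<Longrightarrow> proj kB' \<circ>\<^sub>C x \<in> Hom C S B'" "x \<in> Hom C S S \<Longrightarrow> proj kD \<circ>\<^sub>C x \<in> Hom C S D"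
  "x \<in> Hom C S S \<Longrightarrow> proj kA' \<circ>\<^sub>C x \<in> Hom C S A'" "x \<in> Hom C S S \<Longrightarrow> proj kB \<circ>\<^sub>C x \<in> Hom C S B"
  "x \<in> Hom C S S \<Longrightarrow> proj kD' \<circ>\<^sub>C x \<in> Hom C S D'"
  using comp_in_hom proj_homs by blast+

lemmas matrix_simps = proj_homs proj_comp_homs T.obs T'.obs S_ob basic_homs
  basic_homs[THEN postcomp_rules(1)] basic_homs[THEN postcomp_rules(2)] basic_homs[THEN postcomp_rules(3)]
  basic_homs[THEN postcomp_rules(4)] basic_homs[THEN postcomp_rules(5)] basic_homs[THEN postcomp_rules(6)]
  matrix_unit_hom proj_matrix_unit proj_matrix_unit_comp neg_in_hom endo_comp_hom endo_distrib_right add_in_hom proj_add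
  comp_zero_right[OF proj_hom S_ob] zero_in_hom[OF S_ob] comp_id_left[of _ S] zero_add add_zero

lemma complex_homs: "e0 \<in> Hom C S S" "f1 \<in> Hom C S S" "e2 \<in> Hom C S S" "f3 \<in> Hom C S S"
  "d0 \<in> Hom C S S" "d1 \<in> Hom C S S" "d2 \<in> Hom C S S"
  unfolding complex_defs by (simp_all add: matrix_simps)

lemma triangle_relations:
  "x \<in> Hom C S A \<Longrightarrow> v \<circ>\<^sub>C u \<circ>\<^sub>C x = zer C S D"
  "x \<in> Hom C S A \<Longrightarrow> b \<circ>\<^sub>C u \<circ>\<^sub>C x = u' \<circ>\<^sub>C a \<circ>\<^sub>C x"
  "x \<in> Hom C S B \<Longrightarrow> c \<circ>\<^sub>C v \<circ>\<^sub>C x = v' \<circ>\<^sub>C b \<circ>\<^sub>C x"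
  "x \<in> Hom C S A' \<Longrightarrow> v' \<circ>\<^sub>C u' \<circ>\<^sub>C x = zer C S D'"
  using comp_assoc[OF _ T.homs(1,2)] tri_comp_zero[OF T.tri] comp_zero_left[OF _ T.obs(3)]
    comp_assoc[OF _ T.homs(1) b] comp_assoc[OF _ a T'.homs(1)] bu
    comp_assoc[OF _ T.homs(2) c] comp_assoc[OF _ b T'.homs(2)] cv
    comp_assoc[OF _ T'.homs(1,2)] tri_comp_zero[OF T'.tri] comp_zero_left[OF _ T'.obs(3)]
  by metis+

lemma idempotents: "e0 \<circ>\<^sub>C e0 = e0" "f1 \<circ>\<^sub>C f1 = f1" "e2 \<circ>\<^sub>C e2 = e2" "f3 \<circ>\<^sub>C f3 = f3"
  by (rule eq_by_components; simp add: complex_homs complex_defs matrix_simps)+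

lemma orthogonal: "e0 \<circ>\<^sub>C e2 = zer C S S" "e2 \<circ>\<^sub>C e0 = zer C S S" "f1 \<circ>\<^sub>C f3 = zer C S S" "f3 \<circ>\<^sub>C f1 = zer C S S"
  by (rule eq_by_components; simp add: complex_homs complex_defs matrix_simps)+

lemma differentials_in_corners:
  "f1 \<circ>\<^sub>C d0 = d0" "d0 \<circ>\<^sub>C e0 = d0" "e2 \<circ>\<^sub>C d1 = d1" "d1 \<circ>\<^sub>C f1 = d1" "f3 \<circ>\<^sub>C d2 = d2" "d2 \<circ>\<^sub>C e2 = d2"
  by (rule eq_by_components; simp add: complex_homs complex_defs matrix_simps)+

lemma differentials_compose_to_zero: "d1 \<circ>\<^sub>C d0 = zer C S S" "d2 \<circ>\<^sub>C d1 = zer C S S"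
  by (rule eq_by_components;
      simp add: complex_homs complex_defs matrix_simps triangle_relations add_neg neg_zero)+

lemma biproduct_retracts: "iP \<circ>\<^sub>C pP = e0 +\<^sub>C e2" "iQ \<circ>\<^sub>C pQ = f1 +\<^sub>C f3"
proof -
  have "iP \<in> Hom C P S" "pP \<in> Hom C S P" "iQ \<in> Hom C Q S" "pQ \<in> Hom C S Q"
    using biproduct unfolding biproduct_def by blast+
  then have idem: "iP \<circ>\<^sub>C pP \<in> Hom C S S" "iQ \<circ>\<^sub>C pQ \<in> Hom C S S" using comp_in_hom by blast+
  show "iP \<circ>\<^sub>C pP = e0 +\<^sub>C e2" "iQ \<circ>\<^sub>C pQ = f1 +\<^sub>C f3"
    by (rule eq_by_components; simp add: idem complex_homs complex_defs matrix_simps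
        sum_proj_retract_P[OF biproduct decomposition_P decomposition_Q]
        sum_proj_retract_Q[OF biproduct decomposition_P decomposition_Q])+
qed

lemma exact_at_e0:
  assumes m: "m \<in> Hom C S S" and e0m: "e0 \<circ>\<^sub>C m = m" and d0m: "d0 \<circ>\<^sub>C m = zer C S S"
  shows "m = zer C S S"
proof -
  have "u \<circ>\<^sub>C proj kA \<circ>\<^sub>C m = proj kB \<circ>\<^sub>C d0 \<circ>\<^sub>C m" "a \<circ>\<^sub>C proj kA \<circ>\<^sub>C m = proj kA' \<circ>\<^sub>C d0 \<circ>\<^sub>C m"
    using m by (simp_all add: complex_defs matrix_simps)
  then have "u \<circ>\<^sub>C proj kA \<circ>\<^sub>C m = zer C S B" "a \<circ>\<^sub>C proj kA \<circ>\<^sub>C m = zer C S A'"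
    using d0m by (simp_all add: matrix_simps)
  then have mA: "proj kA \<circ>\<^sub>C m = zer C S A" by (rule complex_exact_at_A[OF proj_comp_homs(1)[OF m]])
  have "e0 \<circ>\<^sub>C m = zer C S S"
    by (rule eq_by_components; simp add: m mA complex_homs complex_defs matrix_simps)
  then show ?thesis using e0m by simp
qed

lemma exact_at_f1:
  assumes x: "x \<in> Hom C S S" and f1x: "f1 \<circ>\<^sub>C x = x" and d1x: "d1 \<circ>\<^sub>C x = zer C S S"
  obtains m where "m \<in> Hom C S S" "e0 \<circ>\<^sub>C m = m" "d0 \<circ>\<^sub>C m = x"
proof -
  have "v \<circ>\<^sub>C proj kB \<circ>\<^sub>C x = proj kD \<circ>\<^sub>C d1 \<circ>\<^sub>C x"
      "b \<circ>\<^sub>C proj kB \<circ>\<^sub>C x +\<^sub>C neg S B' (u' \<circ>\<^sub>C proj kA' \<circ>\<^sub>C x) = proj kB' \<circ>\<^sub>C d1 \<circ>\<^sub>C x"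
    using x by (simp_all add: complex_defs matrix_simps)
  then have "v \<circ>\<^sub>C proj kB \<circ>\<^sub>C x = zer C S D" "b \<circ>\<^sub>C proj kB \<circ>\<^sub>C x = u' \<circ>\<^sub>C proj kA' \<circ>\<^sub>C x"
    using d1x x add_neg_eq_zero_iff by (simp_all add: matrix_simps)
  then obtain m where m: "m \<in> Hom C S A" "u \<circ>\<^sub>C m = proj kB \<circ>\<^sub>C x" "a \<circ>\<^sub>C m = proj kA' \<circ>\<^sub>C x"
    using complex_exact_at_BA'[OF proj_comp_homs(5,4)[OF x]] by blast
  have "e0 \<circ>\<^sub>C incl kA \<circ>\<^sub>C m = incl kA \<circ>\<^sub>C m"
    by (rule eq_by_components; simp add: m complex_homs complex_defs matrix_simps proj_incl_comp incl_comp_hom)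
  moreover have "d0 \<circ>\<^sub>C incl kA \<circ>\<^sub>C m = f1 \<circ>\<^sub>C x"
    by (rule eq_by_components; simp add: m x complex_homs complex_defs matrix_simps proj_incl_comp incl_comp_hom)
  ultimately show ?thesis using that incl_comp_hom[of m kA] m(1) f1x by simp
qed

lemma exact_at_e2:
  assumes y: "y \<in> Hom C S S" and e2y: "e2 \<circ>\<^sub>C y = y" and d2y: "d2 \<circ>\<^sub>C y = zer C S S"
  obtains x where "x \<in> Hom C S S" "f1 \<circ>\<^sub>C x = x" "d1 \<circ>\<^sub>C x = y"
proof -
  have "c \<circ>\<^sub>C proj kD \<circ>\<^sub>C y +\<^sub>C neg S D' (v' \<circ>\<^sub>C proj kB' \<circ>\<^sub>C y) = proj kD' \<circ>\<^sub>C d2 \<circ>\<^sub>C y"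
    using y by (simp add: complex_defs matrix_simps)
  then have "c \<circ>\<^sub>C proj kD \<circ>\<^sub>C y = v' \<circ>\<^sub>C proj kB' \<circ>\<^sub>C y"
    using d2y y add_neg_eq_zero_iff by (simp add: matrix_simps)
  then obtain \<beta> \<alpha> where \<beta>\<alpha>: "\<beta> \<in> Hom C S B" "\<alpha> \<in> Hom C S A'" "v \<circ>\<^sub>C \<beta> = proj kD \<circ>\<^sub>C y"
      "b \<circ>\<^sub>C \<beta> = proj kB' \<circ>\<^sub>C y +\<^sub>C u' \<circ>\<^sub>C \<alpha>"
    using complex_exact_at_DB'[OF proj_comp_homs(3,2)[OF y]] by blast
  define x where "x = incl kB \<circ>\<^sub>C \<beta> +\<^sub>C incl kA' \<circ>\<^sub>C \<alpha>"
  have x: "x \<in> Hom C S S" unfolding x_def using \<beta>\<alpha> incl_comp_hom[of \<beta> kB] incl_comp_hom[of \<alpha> kA'] add_in_hom by simp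
  have "f1 \<circ>\<^sub>C x = x"
    by (rule eq_by_components; simp add: x \<beta>\<alpha> x_def complex_homs complex_defs matrix_simps proj_incl_comp incl_comp_hom)
  moreover have "d1 \<circ>\<^sub>C x = e2 \<circ>\<^sub>C y"
    by (rule eq_by_components; simp add: x y \<beta>\<alpha> x_def complex_homs complex_defs matrix_simps proj_incl_comp
        incl_comp_hom add_neg_cancel_right)
  ultimately show ?thesis using that x e2y by simp
qed

lemma exact_at_f3:
  assumes z: "z \<in> Hom C S S" and f3z: "f3 \<circ>\<^sub>C z = z"
  obtains y where "y \<in> Hom C S S" "e2 \<circ>\<^sub>C y = y" "d2 \<circ>\<^sub>C y = z"
proof -
  obtain \<gamma> \<beta>' where \<gamma>\<beta>': "\<gamma> \<in> Hom C S D" "\<beta>' \<in> Hom C S B'"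
      "proj kD' \<circ>\<^sub>C z = c \<circ>\<^sub>C \<gamma> +\<^sub>C neg S D' (v' \<circ>\<^sub>C \<beta>')"
    using complex_exact_at_D'[OF proj_comp_homs(6)[OF z]] by blast
  define y where "y = incl kD \<circ>\<^sub>C \<gamma> +\<^sub>C incl kB' \<circ>\<^sub>C \<beta>'"
  have y: "y \<in> Hom C S S" unfolding y_def using \<gamma>\<beta>' incl_comp_hom[of \<gamma> kD] incl_comp_hom[of \<beta>' kB'] add_in_hom by simp
  have "e2 \<circ>\<^sub>C y = y"
    by (rule eq_by_components; simp add: y \<gamma>\<beta>' y_def complex_homs complex_defs matrix_simps proj_incl_comp incl_comp_hom)
  moreover have "d2 \<circ>\<^sub>C y = f3 \<circ>\<^sub>C z"
    by (rule eq_by_components; simp add: y z \<gamma>\<beta>' y_def complex_homs complex_defs matrix_simps proj_incl_comp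
        incl_comp_hom)
  ultimately show ?thesis using that y f3z by simp
qed

lemma isomorphic_P_Q: "isomorphic C P Q"
proof -
  interpret R: ring "endo_ring S" by (rule ring_endo_ring[OF S_ob])
  have R_simps: "carrier (endo_ring S) = Hom C S S" "\<zero>\<^bsub>endo_ring S\<^esub> = zer C S S"
      "x \<otimes>\<^bsub>endo_ring S\<^esub> y = x \<circ>\<^sub>C y" "x \<oplus>\<^bsub>endo_ring S\<^esub> y = x +\<^sub>C y" for x y
    by (simp_all add: endo_ring_def)
  have zz: "zer C S S \<circ>\<^sub>C zer C S S = zer C S S" using comp_zero_left zero_in_hom S_ob by blast
  have "R.exact_at \<zero>\<^bsub>endo_ring S\<^esub> \<zero>\<^bsub>endo_ring S\<^esub> e0 d0"
    unfolding R.exact_at_def R_simps using exact_at_e0 zz zero_in_hom[OF S_ob S_ob] by blast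
  moreover have "R.exact_at e0 d0 f1 d1"
    unfolding R.exact_at_def R_simps by (blast elim: exact_at_f1)
  moreover have "R.exact_at f1 d1 e2 d2"
    unfolding R.exact_at_def R_simps by (blast elim: exact_at_e2)
  moreover have "R.exact_at e2 d2 f3 \<zero>\<^bsub>endo_ring S\<^esub>"
    unfolding R.exact_at_def R_simps by (blast elim: exact_at_f3)
  moreover have "d0 \<in> R.corner f1 e0" "d1 \<in> R.corner e2 f1" "d2 \<in> R.corner f3 e2"
    unfolding R.corner_def R_simps using complex_homs differentials_in_corners by simp_all
  ultimately obtain \<Phi> \<Psi> where \<Phi>\<Psi>: "\<Phi> \<in> Hom C S S" "\<Psi> \<in> Hom C S S"
      "\<Psi> \<circ>\<^sub>C \<Phi> = iP \<circ>\<^sub>C pP" "\<Phi> \<circ>\<^sub>C \<Psi> = iQ \<circ>\<^sub>C pQ"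
    using R.exact_complex_splits[of e0 f1 e2 f3 d0 d1 d2] complex_homs idempotents orthogonal
      differentials_compose_to_zero biproduct_retracts by (auto simp: R_simps)
  have "iP \<in> Hom C P S" "pP \<in> Hom C S P" "pP \<circ>\<^sub>C iP = idm C P"
    "iQ \<in> Hom C Q S" "pQ \<in> Hom C S Q" "pQ \<circ>\<^sub>C iQ = idm C Q"
    using biproduct unfolding biproduct_def by blast+
  then show ?thesis using isomorphic_if_retracts_equivalent \<Phi>\<Psi> by blast
qed

end

context two_presentations
begin

lemma triangle_comparison_exists:
  obtains a b c b' c' h h'
  where "triangle_comparison C A B D u v w A' B' D' u' v' w' FO FM \<pi> \<pi>' a b c b' c' h h'"
proof -
  interpret swap: two_presentations C A' B' D' u' v' w' A B D u v w FO FM \<pi>' \<pi>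
    by (intro two_presentations.intro presentation.intro presentation_axioms.intro
        triangulated_category.intro) (fact triangulated T'.tri T'.presents T.tri T.presents)+
  obtain c where c: "c \<in> Hom C D D'" "\<And>X \<gamma>. \<gamma> \<in> Hom C X D \<Longrightarrow> \<pi>' X (c \<circ>\<^sub>C \<gamma>) = \<pi> X \<gamma>"
    using comparison_exists by blast
  obtain c' where c': "c' \<in> Hom C D' D" "\<And>X \<gamma>. \<gamma> \<in> Hom C X D' \<Longrightarrow> \<pi> X (c' \<circ>\<^sub>C \<gamma>) = \<pi>' X \<gamma>"
    using swap.comparison_exists by blast
  obtain b where b: "b \<in> Hom C B B'" "c \<circ>\<^sub>C v = v' \<circ>\<^sub>C b" using comparison_lift c by blast
  obtain b' where b': "b' \<in> Hom C B' B" "c' \<circ>\<^sub>C v' = v \<circ>\<^sub>C b'" using swap.comparison_lift c' by blast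
  obtain h where h: "h \<in> Hom C D B" "idm C D = c' \<circ>\<^sub>C c +\<^sub>C v \<circ>\<^sub>C h"
    using comparison_homotopy c c' by blast
  obtain h' where h': "h' \<in> Hom C D' B'" "idm C D' = c \<circ>\<^sub>C c' +\<^sub>C v' \<circ>\<^sub>C h'"
    using swap.comparison_homotopy c c' by blast
  obtain a where a: "a \<in> Hom C A A'" "b \<circ>\<^sub>C u = u' \<circ>\<^sub>C a" "shM C a \<circ>\<^sub>C w = w' \<circ>\<^sub>C c"
    using tri_complete_left[OF T.tri T'.tri b(1) c(1) b(2)] by blast
  show ?thesis
    by (rule that, unfold_locales) (use a b c b' c' h h' in auto)
qed

end

theorem lemmaA1:
  fixes C :: "('o, 'm) tcat"
    and FO :: "'o \<Rightarrow> 'x monoid" and FM :: "'m \<Rightarrow> 'x \<Rightarrow> 'x"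
    and \<pi> \<pi>' :: "'o \<Rightarrow> 'm \<Rightarrow> 'x"
  assumes "triangulated C"
    and "(A, B, D, u, v, w) \<in> tri C"
    and "(A', B', D', u', v', w') \<in> tri C"
    and "presents C (A, B, D, u, v, w) FO FM \<pi>"
    and "presents C (A', B', D', u', v', w') FO FM \<pi>'"
  shows "\<forall>P Q. is_biproduct3 C A B' D P \<longrightarrow> is_biproduct3 C A' B D' Q \<longrightarrow> isomorphic C P Q"
proof (intro allI impI)
  fix P Q assume P: "is_biproduct3 C A B' D P" and Q: "is_biproduct3 C A' B D' Q"
  interpret two_presentations C A B D u v w A' B' D' u' v' w' FO FM \<pi> \<pi>'
    by (intro two_presentations.intro presentation.intro presentation_axioms.intro
        triangulated_category.intro) (fact assms)+
  obtain a b c b' c' h h' where comparison: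
    "triangle_comparison C A B D u v w A' B' D' u' v' w' FO FM \<pi> \<pi>' a b c b' c' h h'"
    by (rule triangle_comparison_exists)
  obtain inclP projP where dP: "decomposition P (case_idx3 A B' D) inclP projP"
    using decomposition_biproduct3[OF P] by blast
  obtain inclQ projQ where dQ: "decomposition Q (case_idx3 A' B D') inclQ projQ"
    using decomposition_biproduct3[OF Q] by blast
  obtain S iP iQ pP pQ where "biproduct C P Q S iP iQ pP pQ"
    using biproduct_exists decompositionD(1)[OF dP] decompositionD(1)[OF dQ] by blast
  then interpret comparison_complex C A B D u v w A' B' D' u' v' w' FO FM \<pi> \<pi>' a b c b' c' h h'
      P Q S iP iQ pP pQ inclP projP inclQ projQ
    using comparison dP dQ by (intro comparison_complex.intro comparison_complex_axioms.intro)
  show "isomorphic C P Q" by (rule isomorphic_P_Q)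
qed

end
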